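(* Let $\lambda\in\mathfrak{h}^*$ be integral with $\lambda+\rho$ dominant, and suppose $\Sigma=\{\alpha_{i_1},\dots,\alpha_{i_s}\}$ ($i_1<\dots<i_s$) contains no two adjacent simple roots. Identify $W^{\mathfrak{p}}$ with $\{0,1\}^n$ via LS words. (1) If $\alpha_n\notin\Sigma$, then $W^{\mathfrak{p},\Sigma}=\{d_1\dots d_n: d_{i_k}d_{i_k+1}=01 \text{ for } k=1,\dots,s\}$. (2) If $\alpha_n\in\Sigma$ (so $i_s=n$), then $W^{\mathfrak{p},\Sigma}=\{d_1\dots d_{n-1}0: d_{i_k}d_{i_k+1}=01\text{ for }k=1,\dots,s-1\}$.
   Context: Setup: $\mathfrak{g}=\mathfrak{sp}(2n,\mathbb{C})$, weights $[\lambda_1,\dots,\lambda_n]$; integral means all $\lambda_i\in\mathbb{Z}$, dominant means $\lambda_1\ge\dots\ge\lambda_n\ge 0$. Positive roots $a_{ij}=\epsilon_i-\epsilon_j$, $b_i=2\epsilon_i$, $c_{ij}=\epsilon_i+\epsilon_j$, $c_{ii}:=b_i$; simple roots $\alpha_i=\epsilon_i-\epsilon_{i+1}$ ($i<n$), $\alpha_n=2\epsilon_n$; $\rho=[n,\dots,1]$. $\mathfrak{p}$ is the parabolic with Levi containing $\alpha_1,\dots,\alpha_{n-1}$, $\Delta(\mathfrak{u})=\{c_{ij}:i\le j\}$; $\Phi_w=\{\alpha>0:w^{-1}\alpha<0\}$; $W^{\mathfrak{p}}=\{w\in W:\Phi_w\subseteq\Delta(\mathfrak{u})\}$. Simple singular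 roots: $\Sigma=\{\alpha\text{ simple}:\langle\lambda+\rho,\alpha^\vee\rangle=0\}$. Singular Hasse diagram: $W^{\mathfrak{p},\Sigma}=\{w\in W^{\mathfrak{p}}: w\sigma_\alpha\in W^{\mathfrak{p}}\text{ and } l(w\sigma_\alpha)>l(w)\text{ for all }\alpha\in\Sigma\}$. LS word of $w\in W^{\mathfrak{p}}$: the unique $d\in\{0,1\}^n$ with $\Phi_w=S(d)$, where for $d$ with ones exactly at positions $j_1<\dots<j_k$, $S(d)=\{c_{r,\,n+1-m}:1\le m\le k,\ j_m-m+1\le r\le n+1-m\}$. *)

theory Defs
  imports Main
begin

text \<open>Type C_n, g = sp(2n,C). Coordinates are indexed 1..n.
 Weights/roots are functions nat => int (only coordinates 1..n matter).
 Weyl group elements are signed permutations, represented as maps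
 w :: int => int on the index set {-n..-1,1..n} with w(-x) = -w x,
 meaning w(eps_j) = eps_{w j} where eps_{-k} = -eps_k.\<close>

definition simple_refl :: "nat \<Rightarrow> nat \<Rightarrow> int \<Rightarrow> int" where
  "simple_refl n i = (if i < n then
      (\<lambda>x. if x = int i then int i + 1 else if x = int i + 1 then int i
           else if x = - int i then - (int i + 1) else if x = - (int i + 1) then - int i else x)
    else (\<lambda>x. if x = int n then - int n else if x = - int n then int n else x))"

definition word_elem :: "nat \<Rightarrow> nat list \<Rightarrow> int \<Rightarrow> int" where
  "word_elem n is = foldr (\<lambda>i acc. simple_refl n i \<circ> acc) is id"

definition weyl :: "nat \<Rightarrow> (int \<Rightarrow> int) set" where
  "weyl n = {word_elem n is | is. set is \<subseteq> {1..n}}"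

definition len :: "nat \<Rightarrow> (int \<Rightarrow> int) \<Rightarrow> nat" where
  "len n w = (LEAST k. \<exists>is. set is \<subseteq> {1..n} \<and> length is = k \<and> word_elem n is = w)"

text \<open>Action of w^{-1} on a vector v: w^{-1} eps_k = sgn(w j) eps_j where |w j| = k.\<close>
definition inv_act :: "nat \<Rightarrow> (int \<Rightarrow> int) \<Rightarrow> (nat \<Rightarrow> int) \<Rightarrow> nat \<Rightarrow> int" where
  "inv_act n w v = (\<lambda>i. if 1 \<le> i \<and> i \<le> n then sgn (w (int i)) * v (nat \<bar>w (int i)\<bar>) else 0)"

definition root_a :: "nat \<Rightarrow> nat \<Rightarrow> nat \<Rightarrow> int" where
  "root_a i j = (\<lambda>k. (if k = i then 1 else 0) - (if k = j then 1 else 0))"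

text \<open>root_c i j = eps_i + eps_j; root_c i i = 2 eps_i = b_i.\<close>
definition root_c :: "nat \<Rightarrow> nat \<Rightarrow> nat \<Rightarrow> int" where
  "root_c i j = (\<lambda>k. (if k = i then 1 else 0) + (if k = j then 1 else 0))"

definition pos_roots :: "nat \<Rightarrow> (nat \<Rightarrow> int) set" where
  "pos_roots n = {root_a i j | i j. 1 \<le> i \<and> i < j \<and> j \<le> n}
               \<union> {root_c i j | i j. 1 \<le> i \<and> i \<le> j \<and> j \<le> n}"

definition neg_roots :: "nat \<Rightarrow> (nat \<Rightarrow> int) set" where
  "neg_roots n = (\<lambda>v. (\<lambda>k. - v k)) ` pos_roots n"

definition Phi :: "nat \<Rightarrow> (int \<Rightarrow> int) \<Rightarrow> (nat \<Rightarrow> int) set" where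
  "Phi n w = {\<alpha> \<in> pos_roots n. inv_act n w \<alpha> \<in> neg_roots n}"

definition Delta_u :: "nat \<Rightarrow> (nat \<Rightarrow> int) set" where
  "Delta_u n = {root_c i j | i j. 1 \<le> i \<and> i \<le> j \<and> j \<le> n}"

definition Wp :: "nat \<Rightarrow> (int \<Rightarrow> int) set" where
  "Wp n = {w \<in> weyl n. Phi n w \<subseteq> Delta_u n}"

text \<open>lambda + rho, with rho = [n, ..., 1].\<close>
definition lam_rho :: "nat \<Rightarrow> (nat \<Rightarrow> int) \<Rightarrow> nat \<Rightarrow> int" where
  "lam_rho n lam i = lam i + int (n + 1 - i)"

text \<open>Simple singular roots, as the set of indices i with alpha_i singular.
 Coroots: alpha_i^vee = eps_i - eps_{i+1} (i<n), alpha_n^vee = eps_n.\<close>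
definition Sigma :: "nat \<Rightarrow> (nat \<Rightarrow> int) \<Rightarrow> nat set" where
  "Sigma n lam = {i \<in> {1..n}.
     (if i < n then lam_rho n lam i - lam_rho n lam (i + 1) else lam_rho n lam n) = 0}"

definition WpSigma :: "nat \<Rightarrow> (nat \<Rightarrow> int) \<Rightarrow> (int \<Rightarrow> int) set" where
  "WpSigma n lam = {w \<in> Wp n. \<forall>i \<in> Sigma n lam.
      w \<circ> simple_refl n i \<in> Wp n \<and> len n (w \<circ> simple_refl n i) > len n w}"

text \<open>Words d in {0,1}^n as bool lists of length n; d_j = d ! (j-1).
 ones n d = [j_1, ..., j_k], the positions of the ones in increasing order.\<close>
definition ones :: "nat \<Rightarrow> bool list \<Rightarrow> nat list" where
  "ones n d = filter (\<lambda>j. d ! (j - 1)) [1..<n+1]"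

definition S_set :: "nat \<Rightarrow> bool list \<Rightarrow> (nat \<Rightarrow> int) set" where
  "S_set n d = {root_c r (n + 1 - m) | m r. 1 \<le> m \<and> m \<le> length (ones n d)
      \<and> ones n d ! (m - 1) + 1 - m \<le> r \<and> r \<le> n + 1 - m}"

definition LS :: "nat \<Rightarrow> (int \<Rightarrow> int) \<Rightarrow> bool list" where
  "LS n w = (THE d. length d = n \<and> Phi n w = S_set n d)"

end

theory Submission
  imports Defs
begin

text \<open>Realise W as the signed permutations of \<open>{-n..-1, 1..n}\<close>. Every root is \<open>\<epsilon>\<^sub>a + \<epsilon>\<^sub>b\<close> for
signed indices \<open>a \<noteq> -b\<close> (with \<open>\<epsilon>\<^sub>-\<^sub>k = -\<epsilon>\<^sub>k\<close>), so inversion sets can be computed by hand: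
right multiplication by \<open>s\<^sub>i\<close> adds or removes exactly the root \<open>w \<alpha>\<^sub>i\<close>, hence \<open>l(w) = |\<Phi>\<^sub>w|\<close>.
An element of \<open>W\<^sup>p\<close> must send the indices j with \<open>w \<epsilon>\<^sub>j > 0\<close> increasingly onto 1, 2, ... and the
others increasingly onto -n, -n+1, ...; so it is determined by its sign word d, its inversion set is
S(d), and d is its LS word. Finally \<open>w s\<^sub>i\<close> is a longer element of \<open>W\<^sup>p\<close> iff \<open>w \<alpha>\<^sub>i \<in> \<Delta>(u)\<close>, i.e.
iff both signed indices of \<open>w \<alpha>\<^sub>i\<close> are positive. For \<open>\<alpha>\<^sub>i = \<epsilon>\<^sub>i - \<epsilon>\<^sub>i\<^sub>+\<^sub>1\<close> this reads
\<open>d\<^sub>i d\<^sub>i\<^sub>+\<^sub>1 = 01\<close>, and for \<open>\<alpha>\<^sub>n = 2\<epsilon>\<^sub>n\<close> it reads \<open>d\<^sub>n = 0\<close>.\<close>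

section \<open>Signed permutations\<close>

definition signed_range :: "nat \<Rightarrow> int set" where
  "signed_range n = {x. 1 \<le> \<bar>x\<bar> \<and> \<bar>x\<bar> \<le> int n}"

definition signed_perm :: "nat \<Rightarrow> (int \<Rightarrow> int) \<Rightarrow> bool" where
  "signed_perm n w \<longleftrightarrow> (\<forall>x. w (-x) = - w x) \<and> (\<forall>x. x \<notin> signed_range n \<longrightarrow> w x = x)
     \<and> (\<forall>x\<in>signed_range n. w x \<in> signed_range n) \<and> inj_on w (signed_range n)"

lemma finite_signed_range: "finite (signed_range n)"
  by (rule finite_subset[of _ "{-int n..int n}"]) (auto simp: signed_range_def)

lemma signed_range_nonzero: "x \<in> signed_range n \<Longrightarrow> x \<noteq> 0"
  by (auto simp: signed_range_def)

lemma signed_range_cases: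
  assumes "x \<in> signed_range n"
  obtains (pos) j where "1 \<le> j" "j \<le> n" "x = int j"
    | (neg) j where "1 \<le> j" "j \<le> n" "x = - int j"
proof (cases "0 < x")
  case True
  then show ?thesis
    using assms pos[of "nat x"] unfolding signed_range_def by auto
next
  case False
  then show ?thesis
    using assms neg[of "nat (-x)"] unfolding signed_range_def by auto
qed

lemma uminus_in_signed_range_iff [simp]: "-x \<in> signed_range n \<longleftrightarrow> x \<in> signed_range n"
  by (auto simp: signed_range_def)

lemma signed_perm_in: "signed_perm n w \<Longrightarrow> x \<in> signed_range n \<Longrightarrow> w x \<in> signed_range n"
  unfolding signed_perm_def by blast

lemma signed_perm_uminus: "signed_perm n w \<Longrightarrow> w (-x) = - w x"
  unfolding signed_perm_def by blast

lemma signed_perm_outside: "signed_perm n w \<Longrightarrow> x \<notin> signed_range n \<Longrightarrow> w x = x"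
  unfolding signed_perm_def by blast

lemma signed_perm_eq_iff:
  "signed_perm n w \<Longrightarrow> x \<in> signed_range n \<Longrightarrow> y \<in> signed_range n \<Longrightarrow> w x = w y \<longleftrightarrow> x = y"
  unfolding signed_perm_def inj_on_def by blast

lemma signed_perm_eq_uminus_iff:
  "signed_perm n w \<Longrightarrow> x \<in> signed_range n \<Longrightarrow> y \<in> signed_range n \<Longrightarrow> w x = - w y \<longleftrightarrow> x = -y"
  using signed_perm_eq_iff[of n w x "-y"] signed_perm_uminus[of n w y] by auto

lemma signed_perm_nonzero: "signed_perm n w \<Longrightarrow> x \<in> signed_range n \<Longrightarrow> w x \<noteq> 0"
  using signed_perm_in signed_range_nonzero by blast

lemma signed_perm_image: "signed_perm n w \<Longrightarrow> w ` signed_range n = signed_range n"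
  using endo_inj_surj[OF finite_signed_range, of w n] unfolding signed_perm_def by blast

lemma signed_perm_preimage:
  assumes "signed_perm n w" "a \<in> signed_range n"
  obtains x where "x \<in> signed_range n" "w x = a"
  using signed_perm_image[OF assms(1)] assms(2) by (metis imageE)

lemma signed_perm_id: "signed_perm n id"
  unfolding signed_perm_def by simp

lemma signed_perm_comp: "signed_perm n w \<Longrightarrow> signed_perm n v \<Longrightarrow> signed_perm n (w \<circ> v)"
  unfolding signed_perm_def inj_on_def o_def by metis

lemma simple_refl_simple_refl:
  assumes "1 \<le> i" "i \<le> n"
  shows "simple_refl n i (simple_refl n i x) = x"
  using assms unfolding simple_refl_def by (auto split: if_splits)

lemma comp_simple_refl_simple_refl:
  assumes "1 \<le> i" "i \<le> n"
  shows "w \<circ> simple_refl n i \<circ> simple_refl n i = w"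
  using simple_refl_simple_refl[OF assms] by (simp add: fun_eq_iff)

lemma signed_perm_simple_refl:
  assumes "1 \<le> i" "i \<le> n"
  shows "signed_perm n (simple_refl n i)"
proof -
  have "inj_on (simple_refl n i) (signed_range n)"
    by (rule inj_on_inverseI[where g = "simple_refl n i"]) (rule simple_refl_simple_refl[OF assms])
  moreover have "\<forall>x. simple_refl n i (-x) = - simple_refl n i x"
    using assms unfolding simple_refl_def by auto
  moreover have "\<forall>x. x \<notin> signed_range n \<longrightarrow> simple_refl n i x = x"
    and "\<forall>x\<in>signed_range n. simple_refl n i x \<in> signed_range n"
    using assms unfolding simple_refl_def signed_range_def by auto
  ultimately show ?thesis
    unfolding signed_perm_def by blast
qed

section \<open>Roots as sums of two signed unit vectors\<close>

text \<open>\<open>unit_vec x\<close> is \<open>\<epsilon>\<^sub>x\<close> with the convention \<open>\<epsilon>\<^sub>-\<^sub>k = -\<epsilon>\<^sub>k\<close>. The roots are the vectors \<open>eps_sum a b\<close>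
with \<open>a, b \<in> signed_range n\<close> and \<open>a \<noteq> -b\<close> (\<open>a = b\<close> gives the long roots \<open>\<plusminus>2\<epsilon>\<^sub>k\<close>); such a root is
positive iff the summand with the smaller index is, which is what \<open>pos_pair a b\<close> expresses.\<close>

definition unit_vec :: "int \<Rightarrow> nat \<Rightarrow> int" where
  "unit_vec x = (\<lambda>k. if int k = \<bar>x\<bar> then sgn x else 0)"

definition eps_sum :: "int \<Rightarrow> int \<Rightarrow> nat \<Rightarrow> int" where
  "eps_sum a b = (\<lambda>k. unit_vec a k + unit_vec b k)"

definition pos_pair :: "int \<Rightarrow> int \<Rightarrow> bool" where
  "pos_pair a b = (if \<bar>a\<bar> \<le> \<bar>b\<bar> then 0 < a else 0 < b)"

lemma eps_sum_commute: "eps_sum a b = eps_sum b a"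
  by (auto simp: eps_sum_def)

lemma uminus_eps_sum: "(\<lambda>k. - eps_sum a b k) = eps_sum (-a) (-b)"
  unfolding eps_sum_def unit_vec_def by (auto simp: fun_eq_iff)

lemma root_c_eq_eps_sum: "1 \<le> i \<Longrightarrow> 1 \<le> j \<Longrightarrow> root_c i j = eps_sum (int i) (int j)"
  unfolding root_c_def eps_sum_def unit_vec_def by (auto simp: fun_eq_iff)

lemma root_a_eq_eps_sum: "1 \<le> i \<Longrightarrow> 1 \<le> j \<Longrightarrow> root_a i j = eps_sum (int i) (- int j)"
  unfolding root_a_def eps_sum_def unit_vec_def by (auto simp: fun_eq_iff)

lemma eps_sum_eq_imp:
  assumes "a \<in> signed_range n" "b \<in> signed_range n" "c \<in> signed_range n" "d \<in> signed_range n"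
    and "a \<noteq> -b" "c \<noteq> -d" and "eps_sum a b = eps_sum c d"
  shows "(a = c \<and> b = d) \<or> (a = d \<and> b = c)"
proof -
  have "unit_vec a k + unit_vec b k = unit_vec c k + unit_vec d k" for k
    using assms(7) unfolding eps_sum_def by metis
  from this[of "nat \<bar>a\<bar>"] this[of "nat \<bar>b\<bar>"] this[of "nat \<bar>c\<bar>"] this[of "nat \<bar>d\<bar>"] show ?thesis
    using assms(1-6) unfolding unit_vec_def signed_range_def
    by (auto simp: sgn_if abs_if split: if_split_asm)
qed

lemma root_c_eq_imp:
  assumes "root_c a b = root_c c e"
  shows "(a = c \<and> b = e) \<or> (a = e \<and> b = c)"
proof -
  have "root_c a b k = root_c c e k" for k
    using assms by simp
  from this[of a] this[of b] this[of c] this[of e] show ?thesis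
    unfolding root_c_def by (auto split: if_splits)
qed

lemma pos_pair_commute: "a \<noteq> -b \<Longrightarrow> pos_pair a b = pos_pair b a"
  unfolding pos_pair_def by auto

lemma pos_pair_uminus: "a \<noteq> -b \<Longrightarrow> a \<noteq> 0 \<Longrightarrow> b \<noteq> 0 \<Longrightarrow> pos_pair (-a) (-b) \<longleftrightarrow> \<not> pos_pair a b"
  unfolding pos_pair_def by auto

lemma eps_sum_in_pos_roots:
  assumes "a \<in> signed_range n" "b \<in> signed_range n" "a \<noteq> -b" "\<bar>a\<bar> \<le> \<bar>b\<bar>" "0 < a"
  shows "eps_sum a b \<in> pos_roots n"
proof (cases "0 < b")
  case True
  then have "eps_sum a b = root_c (nat a) (nat b)"
    using assms(5) by (simp add: root_c_eq_eps_sum)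
  then show ?thesis
    using assms True unfolding pos_roots_def signed_range_def
    by (intro UnI2 CollectI exI[of _ "nat a"] exI[of _ "nat b"]) auto
next
  case False
  then have "eps_sum a b = root_a (nat a) (nat (-b))"
    using assms(2,5) signed_range_nonzero[of b n] by (simp add: root_a_eq_eps_sum)
  then show ?thesis
    using assms False unfolding pos_roots_def signed_range_def
    by (intro UnI1 CollectI exI[of _ "nat a"] exI[of _ "nat (-b)"]) auto
qed

lemma pos_roots_eq:
  "pos_roots n = {eps_sum a b | a b. a \<in> signed_range n \<and> b \<in> signed_range n \<and> a \<noteq> -b \<and> pos_pair a b}"
proof (rule set_eqI, rule iffI)
  fix v assume "v \<in> pos_roots n"
  then consider (a) i j where "1 \<le> i" "i < j" "j \<le> n" "v = root_a i j"
    | (c) i j where "1 \<le> i" "i \<le> j" "j \<le> n" "v = root_c i j"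
    unfolding pos_roots_def by blast
  then show "v \<in> {eps_sum a b | a b. a \<in> signed_range n \<and> b \<in> signed_range n \<and> a \<noteq> -b \<and> pos_pair a b}"
  proof cases
    case a
    then show ?thesis
      by (intro CollectI exI[of _ "int i"] exI[of _ "- int j"])
        (auto simp: root_a_eq_eps_sum signed_range_def pos_pair_def)
  next
    case c
    then show ?thesis
      by (intro CollectI exI[of _ "int i"] exI[of _ "int j"])
        (auto simp: root_c_eq_eps_sum signed_range_def pos_pair_def)
  qed
next
  fix v assume "v \<in> {eps_sum a b | a b. a \<in> signed_range n \<and> b \<in> signed_range n \<and> a \<noteq> -b \<and> pos_pair a b}"
  then obtain a b where v: "v = eps_sum a b"
    and ab: "a \<in> signed_range n" "b \<in> signed_range n" "a \<noteq> -b" "pos_pair a b"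
    by blast
  show "v \<in> pos_roots n"
  proof (cases "\<bar>a\<bar> \<le> \<bar>b\<bar>")
    case True
    then show ?thesis
      using eps_sum_in_pos_roots[OF ab(1-3)] ab(4) v unfolding pos_pair_def by simp
  next
    case False
    then show ?thesis
      using eps_sum_in_pos_roots[OF ab(2,1)] ab(3,4) v eps_sum_commute[of a b]
      unfolding pos_pair_def by auto
  qed
qed

lemma neg_roots_eq:
  "neg_roots n = {eps_sum a b | a b. a \<in> signed_range n \<and> b \<in> signed_range n \<and> a \<noteq> -b \<and> \<not> pos_pair a b}"
proof (rule set_eqI, rule iffI)
  fix v assume "v \<in> neg_roots n"
  then obtain a b where "v = (\<lambda>k. - eps_sum a b k)"
    "a \<in> signed_range n" "b \<in> signed_range n" "a \<noteq> -b" "pos_pair a b"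
    unfolding neg_roots_def pos_roots_eq by blast
  then show "v \<in> {eps_sum a b | a b. a \<in> signed_range n \<and> b \<in> signed_range n \<and> a \<noteq> -b \<and> \<not> pos_pair a b}"
    using pos_pair_uminus[of a b] signed_range_nonzero[of a n] signed_range_nonzero[of b n]
    by (intro CollectI exI[of _ "-a"] exI[of _ "-b"]) (auto simp: uminus_eps_sum)
next
  fix v assume "v \<in> {eps_sum a b | a b. a \<in> signed_range n \<and> b \<in> signed_range n \<and> a \<noteq> -b \<and> \<not> pos_pair a b}"
  then obtain a b where v: "v = eps_sum a b"
    and ab: "a \<in> signed_range n" "b \<in> signed_range n" "a \<noteq> -b" "\<not> pos_pair a b"
    by blast
  have "eps_sum (-a) (-b) \<in> pos_roots n"
    unfolding pos_roots_eq
    using ab pos_pair_uminus[of a b] signed_range_nonzero[of a n] signed_range_nonzero[of b n]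
    by (intro CollectI exI[of _ "-a"] exI[of _ "-b"]) auto
  moreover have "v = (\<lambda>k. - eps_sum (-a) (-b) k)"
    using v uminus_eps_sum[of "-a" "-b"] by simp
  ultimately show "v \<in> neg_roots n"
    unfolding neg_roots_def by blast
qed

lemma Delta_u_eq:
  "Delta_u n = {eps_sum a b | a b. a \<in> signed_range n \<and> b \<in> signed_range n \<and> 0 < a \<and> 0 < b}"
proof (rule set_eqI, rule iffI)
  fix v assume "v \<in> Delta_u n"
  then obtain i j where "1 \<le> i" "i \<le> j" "j \<le> n" "v = root_c i j"
    unfolding Delta_u_def by blast
  then show "v \<in> {eps_sum a b | a b. a \<in> signed_range n \<and> b \<in> signed_range n \<and> 0 < a \<and> 0 < b}"
    by (intro CollectI exI[of _ "int i"] exI[of _ "int j"]) (auto simp: root_c_eq_eps_sum signed_range_def)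
next
  fix v assume "v \<in> {eps_sum a b | a b. a \<in> signed_range n \<and> b \<in> signed_range n \<and> 0 < a \<and> 0 < b}"
  then obtain a b where ab: "v = eps_sum a b" "a \<in> signed_range n" "b \<in> signed_range n" "0 < a" "0 < b"
    by blast
  have "v = root_c (nat (min a b)) (nat (max a b))"
    using ab eps_sum_commute[of a b] by (simp add: root_c_eq_eps_sum min_def max_def)
  then show "v \<in> Delta_u n"
    using ab unfolding Delta_u_def signed_range_def by fastforce
qed

lemma eps_sum_in_Delta_u_iff:
  assumes "a \<in> signed_range n" "b \<in> signed_range n" "a \<noteq> -b"
  shows "eps_sum a b \<in> Delta_u n \<longleftrightarrow> 0 < a \<and> 0 < b"
proof
  assume "eps_sum a b \<in> Delta_u n"
  then obtain c e where ce: "eps_sum a b = eps_sum c e" "c \<in> signed_range n" "e \<in> signed_range n" "0 < c" "0 < e"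
    unfolding Delta_u_eq by blast
  from eps_sum_eq_imp[OF assms(1,2) ce(2,3) assms(3) _ ce(1)] ce(4,5) show "0 < a \<and> 0 < b"
    by auto
qed (use assms in \<open>auto simp: Delta_u_eq\<close>)

lemma finite_pos_roots: "finite (pos_roots n)"
proof -
  have "pos_roots n \<subseteq> (\<lambda>(a, b). eps_sum a b) ` (signed_range n \<times> signed_range n)"
    unfolding pos_roots_eq by auto
  then show ?thesis
    by (rule finite_subset) (simp add: finite_signed_range)
qed


section \<open>Inversion sets under right multiplication by simple reflections\<close>

lemma inv_act_unit_vec:
  assumes "signed_perm n w" "x \<in> signed_range n" "1 \<le> k" "k \<le> n"
  shows "sgn (w (int k)) * unit_vec (w x) (nat \<bar>w (int k)\<bar>) = unit_vec x k"
proof -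
  have k: "int k \<in> signed_range n"
    using assms(3,4) by (auto simp: signed_range_def)
  have wx: "w x \<in> signed_range n" "w x \<noteq> 0"
    using signed_perm_in[OF assms(1,2)] signed_perm_nonzero[OF assms(1,2)] by auto
  have wk: "w (int k) \<noteq> 0"
    using signed_perm_nonzero[OF assms(1) k] .
  have wo: "w (-x) = - w x"
    using signed_perm_uminus[OF assms(1)] .
  show ?thesis
  proof (cases "\<bar>w (int k)\<bar> = \<bar>w x\<bar>")
    case True
    then have "w (int k) = w x \<or> w (int k) = w (-x)"
      using wo by (auto simp: abs_if split: if_splits)
    then have "int k = x \<or> int k = -x"
      using signed_perm_eq_iff[OF assms(1) k] assms(2) by auto
    then show ?thesis
      using True wx wk wo unfolding unit_vec_def by (auto simp: sgn_if)
  next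
    case False
    then have "int k \<noteq> x \<and> int k \<noteq> -x"
      using wo by auto
    then have "int k \<noteq> \<bar>x\<bar>"
      by (auto simp: abs_if)
    then show ?thesis
      using False wk unfolding unit_vec_def by simp
  qed
qed

lemma inv_act_eps_sum:
  assumes "signed_perm n w" "x \<in> signed_range n" "y \<in> signed_range n"
  shows "inv_act n w (eps_sum (w x) (w y)) = eps_sum x y"
proof (rule ext)
  fix k
  show "inv_act n w (eps_sum (w x) (w y)) k = eps_sum x y k"
  proof (cases "1 \<le> k \<and> k \<le> n")
    case True
    then show ?thesis
      using inv_act_unit_vec[OF assms(1,2)] inv_act_unit_vec[OF assms(1,3)]
      unfolding inv_act_def eps_sum_def by (simp add: algebra_simps)
  next
    case False
    then show ?thesis
      using assms(2,3) unfolding inv_act_def eps_sum_def unit_vec_def signed_range_def by auto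
  qed
qed

lemma pos_roots_obtain_image:
  assumes "signed_perm n w" "v \<in> pos_roots n"
  obtains x y where "x \<in> signed_range n" "y \<in> signed_range n" "x \<noteq> -y"
    "v = eps_sum (w x) (w y)" "pos_pair (w x) (w y)"
proof -
  obtain a b where ab: "v = eps_sum a b" "a \<in> signed_range n" "b \<in> signed_range n" "a \<noteq> -b" "pos_pair a b"
    using assms(2) unfolding pos_roots_eq by blast
  obtain x y where "x \<in> signed_range n" "w x = a" "y \<in> signed_range n" "w y = b"
    using signed_perm_preimage[OF assms(1)] ab(2,3) by metis
  with ab that show ?thesis
    using signed_perm_eq_uminus_iff[OF assms(1)] by blast
qed

lemma eps_sum_image_eq_iff:
  assumes "signed_perm n w" "x \<in> signed_range n" "y \<in> signed_range n" "x \<noteq> -y"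
    and "a \<in> signed_range n" "b \<in> signed_range n" "a \<noteq> -b"
  shows "eps_sum (w x) (w y) = eps_sum (w a) (w b) \<longleftrightarrow> (x = a \<and> y = b) \<or> (x = b \<and> y = a)"
proof
  assume "eps_sum (w x) (w y) = eps_sum (w a) (w b)"
  with eps_sum_eq_imp[of "w x" n "w y" "w a" "w b"] show "(x = a \<and> y = b) \<or> (x = b \<and> y = a)"
    using assms signed_perm_in[OF assms(1)] signed_perm_eq_uminus_iff[OF assms(1)]
      signed_perm_eq_iff[OF assms(1)] by metis
qed (auto simp: eps_sum_commute)

lemma eps_sum_image_in_Phi_iff:
  assumes "signed_perm n w" "x \<in> signed_range n" "y \<in> signed_range n" "x \<noteq> -y"
  shows "eps_sum (w x) (w y) \<in> Phi n w \<longleftrightarrow> pos_pair (w x) (w y) \<and> \<not> pos_pair x y"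
proof -
  have wxy: "w x \<in> signed_range n" "w y \<in> signed_range n" "w x \<noteq> - w y"
    using signed_perm_in[OF assms(1)] assms signed_perm_eq_uminus_iff[OF assms(1,2,3)] by auto
  have pos: "eps_sum (w x) (w y) \<in> pos_roots n \<longleftrightarrow> pos_pair (w x) (w y)"
  proof
    assume "eps_sum (w x) (w y) \<in> pos_roots n"
    then obtain a b where ab: "eps_sum (w x) (w y) = eps_sum a b"
      "a \<in> signed_range n" "b \<in> signed_range n" "a \<noteq> -b" "pos_pair a b"
      unfolding pos_roots_eq by blast
    from eps_sum_eq_imp[OF wxy(1,2) ab(2,3) wxy(3) ab(4,1)] show "pos_pair (w x) (w y)"
      using ab(4,5) pos_pair_commute[of a b] by auto
  qed (use wxy in \<open>auto simp: pos_roots_eq\<close>)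
  have neg: "eps_sum x y \<in> neg_roots n \<longleftrightarrow> \<not> pos_pair x y"
  proof
    assume "eps_sum x y \<in> neg_roots n"
    then obtain a b where ab: "eps_sum x y = eps_sum a b"
      "a \<in> signed_range n" "b \<in> signed_range n" "a \<noteq> -b" "\<not> pos_pair a b"
      unfolding neg_roots_eq by blast
    from eps_sum_eq_imp[OF assms(2,3) ab(2,3) assms(4) ab(4,1)] show "\<not> pos_pair x y"
      using ab(4,5) pos_pair_commute[of a b] by auto
  qed (use assms in \<open>auto simp: neg_roots_eq\<close>)
  show ?thesis
    unfolding Phi_def using pos neg inv_act_eps_sum[OF assms(1-3)] by auto
qed

lemma Phi_subset_pos_roots: "Phi n w \<subseteq> pos_roots n"
  unfolding Phi_def by auto

lemma finite_Phi: "finite (Phi n w)"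
  using finite_subset[OF Phi_subset_pos_roots finite_pos_roots] .

lemma Phi_id: "Phi n id = {}"
proof -
  have "v \<notin> Phi n id" for v
  proof
    assume v: "v \<in> Phi n id"
    then obtain x y where "x \<in> signed_range n" "y \<in> signed_range n" "x \<noteq> -y"
      "v = eps_sum (id x) (id y)" "pos_pair (id x) (id y)"
      using pos_roots_obtain_image[OF signed_perm_id] Phi_subset_pos_roots by blast
    then show False
      using eps_sum_image_in_Phi_iff[OF signed_perm_id, of x n y] v by simp
  qed
  then show ?thesis by blast
qed

text \<open>The simple root \<open>\<alpha>\<^sub>i\<close> is \<open>eps_sum (alpha_fst i) (alpha_snd n i)\<close>, i.e. \<open>\<epsilon>\<^sub>i - \<epsilon>\<^sub>i\<^sub>+\<^sub>1\<close> for \<open>i < n\<close>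
and \<open>2\<epsilon>\<^sub>n\<close> for \<open>i = n\<close>; \<open>alpha_pos n w i\<close> says that \<open>w \<alpha>\<^sub>i\<close> is positive.\<close>

definition alpha_fst :: "nat \<Rightarrow> int" where
  "alpha_fst i = int i"

definition alpha_snd :: "nat \<Rightarrow> nat \<Rightarrow> int" where
  "alpha_snd n i = (if i < n then - (int i + 1) else int n)"

abbreviation alpha_pos :: "nat \<Rightarrow> (int \<Rightarrow> int) \<Rightarrow> nat \<Rightarrow> bool" where
  "alpha_pos n w i \<equiv> pos_pair (w (alpha_fst i)) (w (alpha_snd n i))"

abbreviation alpha_image :: "nat \<Rightarrow> (int \<Rightarrow> int) \<Rightarrow> nat \<Rightarrow> nat \<Rightarrow> int" where
  "alpha_image n w i \<equiv> eps_sum (w (alpha_fst i)) (w (alpha_snd n i))"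

lemma alpha_in_signed_range:
  assumes "1 \<le> i" "i \<le> n"
  shows "alpha_fst i \<in> signed_range n" "alpha_snd n i \<in> signed_range n" "alpha_fst i \<noteq> - alpha_snd n i"
  using assms unfolding alpha_fst_def alpha_snd_def signed_range_def by auto

lemma alpha_pos_id: "1 \<le> i \<Longrightarrow> i \<le> n \<Longrightarrow> alpha_pos n id i"
  unfolding alpha_fst_def alpha_snd_def pos_pair_def by auto

lemma simple_refl_alpha:
  assumes "1 \<le> i" "i \<le> n"
  shows "simple_refl n i (alpha_fst i) = - alpha_snd n i" "simple_refl n i (alpha_snd n i) = - alpha_fst i"
  using assms unfolding simple_refl_def alpha_fst_def alpha_snd_def by auto

text \<open>\<open>s\<^sub>i\<close> permutes the positive roots other than \<open>\<alpha>\<^sub>i\<close> and sends \<open>\<alpha>\<^sub>i\<close> to \<open>-\<alpha>\<^sub>i\<close>.\<close>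

lemma pos_pair_simple_refl:
  assumes "1 \<le> i" "i \<le> n" "x \<in> signed_range n" "y \<in> signed_range n" "x \<noteq> -y"
  shows "pos_pair (simple_refl n i x) (simple_refl n i y) =
    (if (x = alpha_fst i \<and> y = alpha_snd n i) \<or> (x = alpha_snd n i \<and> y = alpha_fst i) then False
     else if (x = - alpha_fst i \<and> y = - alpha_snd n i) \<or> (x = - alpha_snd n i \<and> y = - alpha_fst i) then True
     else pos_pair x y)"
proof (cases "i < n")
  case True
  then have "simple_refl n i z = (if z = int i then int i + 1 else if z = int i + 1 then int i
      else if z = - int i then - (int i + 1) else if z = - (int i + 1) then - int i else z)" for z
    unfolding simple_refl_def by simp
  with True assms show ?thesis
    unfolding pos_pair_def alpha_fst_def alpha_snd_def signed_range_def
    by (simp split: if_split_asm) (smt (verit))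
next
  case False
  then have i: "i = n"
    using assms by simp
  then have "simple_refl n i z = (if z = int n then - int n else if z = - int n then int n else z)" for z
    unfolding simple_refl_def by simp
  with i assms show ?thesis
    unfolding pos_pair_def alpha_fst_def alpha_snd_def signed_range_def
    by (simp split: if_split_asm) (smt (verit))
qed

lemma eps_sum_image_in_Phi_comp_iff:
  assumes "signed_perm n w" "1 \<le> i" "i \<le> n" "x \<in> signed_range n" "y \<in> signed_range n" "x \<noteq> -y"
  shows "eps_sum (w x) (w y) \<in> Phi n (w \<circ> simple_refl n i) \<longleftrightarrow>
     pos_pair (w x) (w y) \<and> \<not> pos_pair (simple_refl n i x) (simple_refl n i y)"
proof -
  let ?s = "simple_refl n i"
  have "?s x \<in> signed_range n" "?s y \<in> signed_range n" "?s x \<noteq> - ?s y"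
    using signed_perm_in[OF signed_perm_simple_refl[OF assms(2,3)]]
      signed_perm_eq_uminus_iff[OF signed_perm_simple_refl[OF assms(2,3)]] assms(4-6) by auto
  from eps_sum_image_in_Phi_iff[OF signed_perm_comp[OF assms(1) signed_perm_simple_refl[OF assms(2,3)]] this]
  show ?thesis
    using simple_refl_simple_refl[OF assms(2,3)] by simp
qed

lemma Phi_ascent:
  assumes perm: "signed_perm n w" and i: "1 \<le> i" "i \<le> n" and pos: "alpha_pos n w i"
  shows "Phi n (w \<circ> simple_refl n i) = insert (alpha_image n w i) (Phi n w)"
    and "alpha_image n w i \<notin> Phi n w"
proof -
  note alpha = alpha_in_signed_range[OF i]
  show "alpha_image n w i \<notin> Phi n w"
    using eps_sum_image_in_Phi_iff[OF perm alpha] alpha_pos_id[OF i] by simp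
  have alpha_in: "alpha_image n w i \<in> pos_roots n"
    using pos alpha signed_perm_in[OF perm] signed_perm_eq_uminus_iff[OF perm]
    unfolding pos_roots_eq by blast
  show "Phi n (w \<circ> simple_refl n i) = insert (alpha_image n w i) (Phi n w)"
  proof (rule set_eqI)
    fix v
    show "v \<in> Phi n (w \<circ> simple_refl n i) \<longleftrightarrow> v \<in> insert (alpha_image n w i) (Phi n w)"
    proof (cases "v \<in> pos_roots n")
      case False
      then show ?thesis
        using alpha_in Phi_subset_pos_roots by blast
    next
      case True
      then obtain x y where xy: "x \<in> signed_range n" "y \<in> signed_range n" "x \<noteq> -y"
        and v: "v = eps_sum (w x) (w y)" and pos_xy: "pos_pair (w x) (w y)"
        using pos_roots_obtain_image[OF perm] by blast
      have not_neg_alpha: "\<not> ((x = - alpha_fst i \<and> y = - alpha_snd n i) \<or> (x = - alpha_snd n i \<and> y = - alpha_fst i))"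
      proof
        assume "(x = - alpha_fst i \<and> y = - alpha_snd n i) \<or> (x = - alpha_snd n i \<and> y = - alpha_fst i)"
        then have "pos_pair (- w (alpha_fst i)) (- w (alpha_snd n i))"
          using pos_xy pos_pair_commute signed_perm_eq_uminus_iff[OF perm xy(1,2)] xy(3)
            signed_perm_uminus[OF perm] by auto
        then show False
          using pos_pair_uminus signed_perm_nonzero[OF perm] signed_perm_eq_uminus_iff[OF perm] alpha pos
          by metis
      qed
      show ?thesis
        unfolding insert_iff v eps_sum_image_eq_iff[OF perm xy alpha]
        using eps_sum_image_in_Phi_comp_iff[OF perm i xy] eps_sum_image_in_Phi_iff[OF perm xy] pos_xy
          pos_pair_simple_refl[OF i xy] not_neg_alpha alpha_pos_id[OF i]
        by (auto simp del: alpha_fst_def)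
    qed
  qed
qed

lemma alpha_pos_comp_simple_refl:
  assumes "signed_perm n w" "1 \<le> i" "i \<le> n"
  shows "alpha_pos n (w \<circ> simple_refl n i) i \<longleftrightarrow> \<not> alpha_pos n w i"
proof -
  note alpha = alpha_in_signed_range[OF assms(2,3)]
  have "w (alpha_fst i) \<noteq> - w (alpha_snd n i)"
    using signed_perm_eq_uminus_iff[OF assms(1) alpha(1,2)] alpha(3) by simp
  then show ?thesis
    using simple_refl_alpha[OF assms(2,3)] pos_pair_uminus pos_pair_commute
      signed_perm_nonzero[OF assms(1)] signed_perm_uminus[OF assms(1)] alpha by auto
qed

lemma card_Phi_ascent:
  "signed_perm n w \<Longrightarrow> 1 \<le> i \<Longrightarrow> i \<le> n \<Longrightarrow> alpha_pos n w i \<Longrightarrow>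
    card (Phi n (w \<circ> simple_refl n i)) = Suc (card (Phi n w))"
  using Phi_ascent[of n w i] finite_Phi by (metis card_insert_disjoint)

lemma card_Phi_descent:
  assumes "signed_perm n w" "1 \<le> i" "i \<le> n" "\<not> alpha_pos n w i"
  shows "card (Phi n w) = Suc (card (Phi n (w \<circ> simple_refl n i)))"
proof -
  have "alpha_pos n (w \<circ> simple_refl n i) i"
    using alpha_pos_comp_simple_refl[OF assms(1-3)] assms(4) by simp
  from card_Phi_ascent[OF signed_perm_comp[OF assms(1) signed_perm_simple_refl[OF assms(2,3)]] assms(2,3) this]
  show ?thesis
    unfolding comp_simple_refl_simple_refl[OF assms(2,3)] .
qed


section \<open>The Weyl group and its length function\<close>

lemma word_elem_snoc: "word_elem n (is @ [i]) = word_elem n is \<circ> simple_refl n i"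
proof -
  have "foldr (\<lambda>i acc. simple_refl n i \<circ> acc) is v = word_elem n is \<circ> v" for v
    unfolding word_elem_def by (induction "is") auto
  then show ?thesis
    unfolding word_elem_def by simp
qed

lemma signed_perm_word_elem: "set is \<subseteq> {1..n} \<Longrightarrow> signed_perm n (word_elem n is)"
proof (induction "is" rule: rev_induct)
  case Nil
  have "word_elem n [] = id"
    by (simp add: word_elem_def)
  then show ?case
    using signed_perm_id by metis
next
  case (snoc i "is")
  then have "signed_perm n (word_elem n is)" "1 \<le> i" "i \<le> n"
    by auto
  then show ?case
    unfolding word_elem_snoc using signed_perm_comp signed_perm_simple_refl by blast
qed

lemma card_Phi_word_elem_le: "set is \<subseteq> {1..n} \<Longrightarrow> card (Phi n (word_elem n is)) \<le> length is"
proof (induction "is" rule: rev_induct)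
  case Nil
  have "word_elem n [] = id"
    by (simp add: word_elem_def)
  then show ?case
    using Phi_id by (metis card.empty order_refl list.size(3))
next
  case (snoc i "is")
  then have i: "1 \<le> i" "i \<le> n" and perm: "signed_perm n (word_elem n is)"
    and IH: "card (Phi n (word_elem n is)) \<le> length is"
    using signed_perm_word_elem by auto
  have "card (Phi n (word_elem n is \<circ> simple_refl n i)) \<le> Suc (length is)"
    using IH card_Phi_ascent[OF perm i] card_Phi_descent[OF perm i]
    by (cases "alpha_pos n (word_elem n is) i") simp_all
  then show ?case
    unfolding word_elem_snoc length_append_singleton .
qed

lemma all_alpha_pos_imp_increasing:
  assumes perm: "signed_perm n w" and pos: "\<And>i. 1 \<le> i \<Longrightarrow> i \<le> n \<Longrightarrow> alpha_pos n w i"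
  shows "1 \<le> j \<Longrightarrow> j \<le> n \<Longrightarrow> 0 < w (int j)"
    and "1 \<le> j \<Longrightarrow> j < n \<Longrightarrow> w (int j) < w (int j + 1)"
proof -
  have next_pos: "0 < w (int j) \<and> w (int j) < w (int j + 1)" if "0 < w (int j + 1)" "1 \<le> j" "j < n" for j
  proof -
    have "pos_pair (w (int j)) (- w (int j + 1))"
      using pos[of j] that signed_perm_uminus[OF perm, of "int j + 1"]
      unfolding alpha_fst_def alpha_snd_def by simp
    moreover have "w (int j) \<noteq> w (int j + 1)"
      using signed_perm_eq_iff[OF perm, of "int j" "int j + 1"] that by (simp add: signed_range_def)
    ultimately show ?thesis
      using that(1) unfolding pos_pair_def by (auto split: if_splits)
  qed
  show pos_j: "0 < w (int j)" if "1 \<le> j" "j \<le> n" for j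
    using that(2)
  proof (induction j rule: inc_induct)
    case base
    then show ?case
      using pos[of n] that unfolding alpha_fst_def alpha_snd_def pos_pair_def by simp
  next
    case (step i)
    then show ?case
      using next_pos[of i] that by (simp add: add.commute)
  qed
  show "w (int j) < w (int j + 1)" if "1 \<le> j" "j < n" for j
    using next_pos[of j] pos_j[of "Suc j"] that by (simp add: add.commute)
qed

lemma increasing_onto_eq:
  fixes f :: "nat \<Rightarrow> int"
  assumes incr: "\<And>j. 1 \<le> j \<Longrightarrow> j < n \<Longrightarrow> f j < f (Suc j)"
    and range: "\<And>j. 1 \<le> j \<Longrightarrow> j \<le> n \<Longrightarrow> 1 \<le> f j \<and> f j \<le> int n"
    and j: "1 \<le> j" "j \<le> n"
  shows "f j = int j"
proof -
  have "int j \<le> f j"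
    using j(1) j
  proof (induction j rule: dec_induct)
    case base
    then show ?case using range[of 1] by simp
  next
    case (step i)
    then show ?case using incr[of i] by simp
  qed
  moreover have "f j \<le> int j"
    using j(2) j
  proof (induction j rule: inc_induct)
    case base
    then show ?case using range[of n] by simp
  next
    case (step i)
    then show ?case using incr[of i] by simp
  qed
  ultimately show ?thesis by simp
qed

lemma all_alpha_pos_imp_id:
  assumes perm: "signed_perm n w" and pos: "\<And>i. 1 \<le> i \<Longrightarrow> i \<le> n \<Longrightarrow> alpha_pos n w i"
  shows "w = id"
proof -
  have fixed: "w (int j) = int j" if "1 \<le> j" "j \<le> n" for j
  proof (rule increasing_onto_eq[of n "\<lambda>j. w (int j)"])
    show "w (int j) < w (int (Suc j))" if "1 \<le> j" "j < n" for j
      using all_alpha_pos_imp_increasing(2)[of n w j] perm pos that by (simp add: add.commute)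
    show "1 \<le> w (int j) \<and> w (int j) \<le> int n" if "1 \<le> j" "j \<le> n" for j
      using all_alpha_pos_imp_increasing(1)[of n w j] perm pos signed_perm_in[OF perm, of "int j"] that
      by (auto simp: signed_range_def)
  qed (use that in auto)
  show ?thesis
  proof
    fix x
    consider "x \<notin> signed_range n" | "0 < x" "x \<in> signed_range n" | "0 < -x" "-x \<in> signed_range n"
      using signed_range_nonzero[of x n] by fastforce
    then show "w x = id x"
    proof cases
      case 1
      then show ?thesis using signed_perm_outside[OF perm] by simp
    next
      case 2
      then show ?thesis using fixed[of "nat x"] by (auto simp: signed_range_def)
    next
      case 3
      then show ?thesis
        using fixed[of "nat (-x)"] signed_perm_uminus[OF perm, of "-x"] by (auto simp: signed_range_def)
    qed
  qed
qed

lemma reduced_word_exists: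
  "signed_perm n w \<Longrightarrow> \<exists>is. set is \<subseteq> {1..n} \<and> length is = card (Phi n w) \<and> word_elem n is = w"
proof (induction "card (Phi n w)" arbitrary: w)
  case 0
  then have "w = id"
    using all_alpha_pos_imp_id card_Phi_descent by (metis nat.distinct(1))
  then show ?case
    using 0(1) by (intro exI[of _ "[]"]) (simp add: word_elem_def)
next
  case (Suc N)
  then have "w \<noteq> id"
    using Phi_id by (metis card.empty nat.distinct(1))
  then obtain i where i: "1 \<le> i" "i \<le> n" "\<not> alpha_pos n w i"
    using all_alpha_pos_imp_id[OF Suc(3)] by blast
  let ?v = "w \<circ> simple_refl n i"
  have "N = card (Phi n ?v)"
    using card_Phi_descent[OF Suc(3) i] Suc(2) by simp
  then obtain "is" where "set is \<subseteq> {1..n}" "length is = card (Phi n ?v)" "word_elem n is = ?v"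
    using Suc(1) signed_perm_comp[OF Suc(3) signed_perm_simple_refl[OF i(1,2)]] by blast
  then show ?case
    using i Suc(2) \<open>N = _\<close> comp_simple_refl_simple_refl[OF i(1,2), of w]
    by (intro exI[of _ "is @ [i]"]) (simp add: word_elem_snoc)
qed

lemma weyl_iff_signed_perm: "w \<in> weyl n \<longleftrightarrow> signed_perm n w"
  unfolding weyl_def using signed_perm_word_elem reduced_word_exists by blast

lemma len_eq_card_Phi:
  assumes "signed_perm n w"
  shows "len n w = card (Phi n w)"
  unfolding len_def
proof (rule Least_equality)
  show "\<exists>is. set is \<subseteq> {1..n} \<and> length is = card (Phi n w) \<and> word_elem n is = w"
    using reduced_word_exists[OF assms] .
next
  fix k
  assume "\<exists>is. set is \<subseteq> {1..n} \<and> length is = k \<and> word_elem n is = w"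
  then show "card (Phi n w) \<le> k"
    using card_Phi_word_elem_le by blast
qed


section \<open>Counting ones and zeros of a word\<close>

text \<open>Positions are 1-based: \<open>d ! (j - 1)\<close> is the letter \<open>d\<^sub>j\<close>, and \<open>ones p d\<close> lists the positions
\<open>\<le> p\<close> carrying a one.\<close>

definition count_ones :: "bool list \<Rightarrow> nat \<Rightarrow> nat" where
  "count_ones d p = length (ones p d)"

definition count_zeros :: "bool list \<Rightarrow> nat \<Rightarrow> nat" where
  "count_zeros d p = p - count_ones d p"

lemma ones_Suc: "ones (Suc p) d = ones p d @ (if d ! p then [Suc p] else [])"
  by (simp add: ones_def)

lemma ones_prefix: "p \<le> q \<Longrightarrow> \<exists>G. ones q d = ones p d @ G"
  by (induction q) (auto simp: ones_Suc le_Suc_eq)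

lemma count_ones_Suc: "count_ones d (Suc p) = count_ones d p + (if d ! p then 1 else 0)"
  by (simp add: count_ones_def ones_Suc)

lemma count_ones_le: "count_ones d p \<le> p"
  by (induction p) (auto simp: count_ones_Suc count_ones_def ones_def)

lemma count_zeros_Suc: "count_zeros d (Suc p) = count_zeros d p + (if d ! p then 0 else 1)"
  using count_ones_le[of d p] by (simp add: count_zeros_def count_ones_Suc)

lemma count_zeros_plus_count_ones: "count_zeros d p + count_ones d p = p"
  using count_ones_le[of d p] by (simp add: count_zeros_def)

lemma count_ones_mono: "p \<le> q \<Longrightarrow> count_ones d p \<le> count_ones d q"
  by (induction q) (auto simp: count_ones_Suc le_Suc_eq)

lemma count_zeros_mono: "p \<le> q \<Longrightarrow> count_zeros d p \<le> count_zeros d q"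
  by (induction q) (auto simp: count_zeros_Suc le_Suc_eq)

lemma count_ones_strict_mono:
  assumes "p < q" "d ! (q - 1)"
  shows "count_ones d p < count_ones d q"
proof -
  obtain r where "q = Suc r" "p \<le> r"
    using assms(1) by (cases q) auto
  then show ?thesis
    using count_ones_mono[of p r d] assms(2) by (simp add: count_ones_Suc)
qed

lemma count_zeros_strict_mono:
  assumes "p < q" "\<not> d ! (q - 1)"
  shows "count_zeros d p < count_zeros d q"
proof -
  obtain r where "q = Suc r" "p \<le> r"
    using assms(1) by (cases q) auto
  then show ?thesis
    using count_zeros_mono[of p r d] assms(2) by (simp add: count_zeros_Suc)
qed

lemma count_ones_pos: "1 \<le> p \<Longrightarrow> d ! (p - 1) \<Longrightarrow> 1 \<le> count_ones d p"
  using count_ones_strict_mono[of 0 p d] by simp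

lemma count_zeros_pos: "1 \<le> p \<Longrightarrow> \<not> d ! (p - 1) \<Longrightarrow> 1 \<le> count_zeros d p"
  using count_zeros_strict_mono[of 0 p d] by (simp add: count_zeros_def)

lemma count_ones_eq_card: "count_ones d j = card {q \<in> {1..j}. d ! (q - 1)}"
proof (induction j)
  case 0
  then show ?case by (simp add: count_ones_def ones_def)
next
  case (Suc j)
  have "{q \<in> {1..Suc j}. d ! (q - 1)} = {q \<in> {1..j}. d ! (q - 1)} \<union> (if d ! j then {Suc j} else {})"
    by (auto simp: le_Suc_eq)
  with Suc show ?case
    by (simp add: count_ones_Suc)
qed

lemma count_zeros_eq_card: "count_zeros d j = card {q \<in> {1..j}. \<not> d ! (q - 1)}"
proof (induction j)
  case 0
  then show ?case by (simp add: count_zeros_def)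
next
  case (Suc j)
  have "{q \<in> {1..Suc j}. \<not> d ! (q - 1)} = {q \<in> {1..j}. \<not> d ! (q - 1)} \<union> (if d ! j then {} else {Suc j})"
    by (auto simp: le_Suc_eq)
  with Suc show ?case
    by (simp add: count_zeros_Suc)
qed

lemma ones_nth_count_ones:
  assumes "1 \<le> p" "p \<le> n" "d ! (p - 1)"
  shows "ones n d ! (count_ones d p - 1) = p"
proof -
  obtain r where r: "p = Suc r"
    using assms(1) by (cases p) auto
  obtain G where "ones n d = ones p d @ G"
    using ones_prefix[OF assms(2)] by blast
  then have "ones n d = ones r d @ [p] @ G"
    using assms(3) r by (simp add: ones_Suc)
  moreover have "count_ones d p - 1 = length (ones r d)"
    using assms(3) r by (simp add: count_ones_def ones_Suc)
  ultimately show ?thesis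
    by (simp add: nth_append)
qed

lemma ones_nth_obtain:
  assumes "1 \<le> m" "m \<le> length (ones n d)"
  obtains p where "1 \<le> p" "p \<le> n" "d ! (p - 1)" "count_ones d p = m" "ones n d ! (m - 1) = p"
proof -
  have "\<exists>p. 1 \<le> p \<and> p \<le> n \<and> d ! (p - 1) \<and> count_ones d p = m"
    using assms(2) unfolding count_ones_def[symmetric]
  proof (induction n)
    case 0
    then show ?case using assms(1) by (simp add: count_ones_def ones_def)
  next
    case (Suc n)
    show ?case
    proof (cases "m \<le> count_ones d n")
      case True
      then show ?thesis using Suc.IH by force
    next
      case False
      then have "d ! n" "m = count_ones d (Suc n)"
        using Suc.prems by (auto simp: count_ones_Suc split: if_splits)
      then show ?thesis by auto
    qed
  qed
  then show ?thesis
    using that ones_nth_count_ones by blast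
qed

lemma length_ones_le: "length (ones n d) \<le> n"
  using count_ones_le[of d n] by (simp add: count_ones_def)

lemma ones_nth_bounds:
  assumes "1 \<le> m" "m \<le> length (ones n d)"
  shows "m \<le> ones n d ! (m - 1)" "ones n d ! (m - 1) \<le> n"
  using ones_nth_obtain[OF assms] count_ones_le by metis+

lemma Suc_in_set_ones_iff: "Suc i \<in> set (ones n d) \<longleftrightarrow> Suc i \<le> n \<and> d ! i"
  unfolding ones_def by (simp add: Suc_le_eq del: upt_Suc)


section \<open>The element of \<open>W\<^sup>p\<close> with a given LS word\<close>

text \<open>\<open>ls_elem n d\<close> sends \<open>\<epsilon>\<^sub>j\<close> to \<open>\<epsilon>\<^sub>c\<close> if \<open>d\<^sub>j\<close> is the c-th zero of d, and to \<open>-\<epsilon>\<^sub>n\<^sub>+\<^sub>1\<^sub>-\<^sub>c\<close> if it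
is the c-th one.\<close>

definition ls_val :: "nat \<Rightarrow> bool list \<Rightarrow> nat \<Rightarrow> int" where
  "ls_val n d j = (if d ! (j - 1) then - int (n + 1 - count_ones d j) else int (count_zeros d j))"

definition ls_elem :: "nat \<Rightarrow> bool list \<Rightarrow> int \<Rightarrow> int" where
  "ls_elem n d x = (if 0 < x \<and> x \<le> int n then ls_val n d (nat x)
     else if 0 < -x \<and> -x \<le> int n then - ls_val n d (nat (-x)) else x)"

lemma ls_elem_pos: "1 \<le> j \<Longrightarrow> j \<le> n \<Longrightarrow> ls_elem n d (int j) = ls_val n d j"
  by (simp add: ls_elem_def)

lemma ls_elem_neg: "1 \<le> j \<Longrightarrow> j \<le> n \<Longrightarrow> ls_elem n d (- int j) = - ls_val n d j"
  by (simp add: ls_elem_def)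

lemma ls_val_bounds:
  assumes "1 \<le> j" "j \<le> n"
  shows "0 < ls_val n d j \<longleftrightarrow> \<not> d ! (j - 1)" "ls_val n d j < 0 \<longleftrightarrow> d ! (j - 1)"
    "1 \<le> \<bar>ls_val n d j\<bar>" "\<bar>ls_val n d j\<bar> \<le> int n"
  using count_ones_pos[OF assms(1), of d] count_zeros_pos[OF assms(1), of d] count_ones_le[of d j]
    count_zeros_plus_count_ones[of d j] assms
  unfolding ls_val_def by auto

lemma ls_val_abs_inj:
  assumes "1 \<le> p" "p \<le> n" "1 \<le> q" "q \<le> n" "\<bar>ls_val n d p\<bar> = \<bar>ls_val n d q\<bar>"
  shows "p = q"
proof -
  have less_imp_False: False if "a < b" "1 \<le> a" "b \<le> n" "\<bar>ls_val n d a\<bar> = \<bar>ls_val n d b\<bar>" for a b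
  proof -
    have mono: "count_ones d a \<le> count_ones d b" "count_zeros d a \<le> count_zeros d b"
      using count_ones_mono count_zeros_mono that(1) by auto
    have sum: "count_zeros d a + count_ones d a = a" "count_zeros d b + count_ones d b = b"
      using count_zeros_plus_count_ones by auto
    show False
    proof (cases "d ! (a - 1)"; cases "d ! (b - 1)")
      assume "d ! (a - 1)" "d ! (b - 1)"
      then show False
        using that count_ones_strict_mono[OF that(1), of d] count_ones_le[of d a] count_ones_le[of d b]
        unfolding ls_val_def by auto
    next
      assume "\<not> d ! (a - 1)" "\<not> d ! (b - 1)"
      then show False
        using that count_zeros_strict_mono[OF that(1), of d] unfolding ls_val_def by auto
    next
      assume "d ! (a - 1)" "\<not> d ! (b - 1)"
      then show False
        using that mono sum count_ones_le[of d a] unfolding ls_val_def by auto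
    next
      assume "\<not> d ! (a - 1)" "d ! (b - 1)"
      then show False
        using that mono sum count_ones_le[of d b] unfolding ls_val_def by auto
    qed
  qed
  show ?thesis
  proof (rule linorder_cases[of p q])
    assume "p < q"
    then show ?thesis using less_imp_False[of p q] assms by simp
  next
    assume "q < p"
    then show ?thesis using less_imp_False[of q p] assms by simp
  qed
qed

lemma signed_perm_ls_elem: "signed_perm n (ls_elem n d)"
proof -
  have abs: "\<bar>ls_elem n d x\<bar> = \<bar>ls_val n d (nat \<bar>x\<bar>)\<bar>" if "x \<in> signed_range n" for x
    using that unfolding ls_elem_def signed_range_def by (auto simp: abs_if)
  have sgn: "0 < ls_elem n d x \<longleftrightarrow> (0 < x \<longleftrightarrow> 0 < ls_val n d (nat \<bar>x\<bar>))" if "x \<in> signed_range n" for x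
    using that ls_val_bounds[of "nat \<bar>x\<bar>" n d] unfolding ls_elem_def signed_range_def by (auto simp: abs_if)
  have "\<forall>x\<in>signed_range n. ls_elem n d x \<in> signed_range n"
  proof
    fix x
    assume x: "x \<in> signed_range n"
    then show "ls_elem n d x \<in> signed_range n"
      using abs[OF x] ls_val_bounds[of "nat \<bar>x\<bar>" n d] unfolding signed_range_def by auto
  qed
  moreover have "inj_on (ls_elem n d) (signed_range n)"
  proof (rule inj_onI)
    fix x y
    assume x: "x \<in> signed_range n" and y: "y \<in> signed_range n" and eq: "ls_elem n d x = ls_elem n d y"
    have "nat \<bar>x\<bar> = nat \<bar>y\<bar>"
    proof (rule ls_val_abs_inj[of "nat \<bar>x\<bar>" n "nat \<bar>y\<bar>" d])
      show "\<bar>ls_val n d (nat \<bar>x\<bar>)\<bar> = \<bar>ls_val n d (nat \<bar>y\<bar>)\<bar>"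
        using abs[OF x] abs[OF y] eq by simp
    qed (use x y in \<open>auto simp: signed_range_def\<close>)
    moreover have "0 < x \<longleftrightarrow> 0 < y"
      using sgn[OF x] sgn[OF y] eq \<open>nat \<bar>x\<bar> = nat \<bar>y\<bar>\<close> by auto
    ultimately show "x = y"
      using x y unfolding signed_range_def by (auto simp: abs_if split: if_splits)
  qed
  moreover have "\<forall>x. ls_elem n d (-x) = - ls_elem n d x"
    and "\<forall>x. x \<notin> signed_range n \<longrightarrow> ls_elem n d x = x"
    unfolding ls_elem_def signed_range_def by auto
  ultimately show ?thesis
    unfolding signed_perm_def by blast
qed

definition S_index :: "nat \<Rightarrow> bool list \<Rightarrow> nat \<Rightarrow> nat \<Rightarrow> bool" where
  "S_index n d m r \<longleftrightarrow> 1 \<le> m \<and> m \<le> length (ones n d) \<and> ones n d ! (m - 1) + 1 - m \<le> r \<and> r \<le> n + 1 - m"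

lemma S_set_eq: "S_set n d = {root_c r (n + 1 - m) | m r. S_index n d m r}"
  unfolding S_set_def S_index_def by auto

lemma S_index_bounds:
  assumes "S_index n d m r"
  shows "1 \<le> m" "1 \<le> r" "m \<le> n" "r \<le> n + 1 - m"
  using assms ones_nth_bounds[of m n d] unfolding S_index_def by auto

lemma S_setI:
  assumes "S_index n d m r" "v = eps_sum (int r) (int (n + 1 - m))"
  shows "v \<in> S_set n d"
proof -
  have "v = root_c r (n + 1 - m)"
    using S_index_bounds[OF assms(1)] assms(2) by (simp add: root_c_eq_eps_sum)
  then show ?thesis
    using assms(1) unfolding S_set_eq by blast
qed

lemma S_set_subset_Delta_u: "S_set n d \<subseteq> Delta_u n"
proof
  fix v
  assume "v \<in> S_set n d"
  then obtain m r where "v = root_c r (n + 1 - m)" "S_index n d m r"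
    unfolding S_set_eq by blast
  with S_index_bounds[of n d m r] show "v \<in> Delta_u n"
    unfolding Delta_u_def by (intro CollectI exI[of _ r] exI[of _ "n + 1 - m"]) auto
qed

lemma S_set_mixed_pair:
  assumes "1 \<le> p" "p < q" "q \<le> n" "pos_pair (- ls_val n d p) (ls_val n d q)"
  shows "eps_sum (- ls_val n d p) (ls_val n d q) \<in> S_set n d"
proof -
  have mono: "count_ones d p \<le> count_ones d q" "count_zeros d p \<le> count_zeros d q"
    using count_ones_mono count_zeros_mono assms(2) by auto
  have sum: "count_zeros d p + count_ones d p = p" "count_zeros d q + count_ones d q = q"
    using count_zeros_plus_count_ones by auto
  have le: "count_ones d p \<le> p" "count_ones d q \<le> q"
    using count_ones_le by auto
  have dp: "d ! (p - 1)" and dq: "\<not> d ! (q - 1)"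
  proof -
    have "d ! (p - 1) \<and> \<not> d ! (q - 1)"
    proof (cases "d ! (p - 1)"; cases "d ! (q - 1)")
      assume "\<not> d ! (p - 1)" "\<not> d ! (q - 1)"
      then show ?thesis
        using assms(4) count_zeros_strict_mono[OF assms(2), of d] by (auto simp: ls_val_def pos_pair_def split: if_splits)
    next
      assume "\<not> d ! (p - 1)" "d ! (q - 1)"
      then show ?thesis
        using assms mono sum le by (auto simp: ls_val_def pos_pair_def split: if_splits)
    next
      assume "d ! (p - 1)" "d ! (q - 1)"
      then show ?thesis
        using assms count_ones_strict_mono[OF assms(2), of d] le by (auto simp: ls_val_def pos_pair_def split: if_splits)
    qed simp
    then show "d ! (p - 1)" "\<not> d ! (q - 1)" by auto
  qed
  have "S_index n d (count_ones d p) (count_zeros d q)"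
    unfolding S_index_def
    using ones_nth_count_ones[OF assms(1) _ dp, of n] count_ones_pos[OF assms(1) dp] assms
      count_ones_mono[of p n d] count_zeros_strict_mono[OF assms(2) dq] sum mono le
    by (auto simp: count_ones_def)
  moreover have "eps_sum (- ls_val n d p) (ls_val n d q) = eps_sum (int (count_zeros d q)) (int (n + 1 - count_ones d p))"
    using dp dq le assms unfolding ls_val_def by (simp add: eps_sum_commute of_nat_diff)
  ultimately show ?thesis
    by (rule S_setI)
qed

lemma S_set_negative_pair:
  assumes "1 \<le> p" "p \<le> q" "q \<le> n" "pos_pair (- ls_val n d p) (- ls_val n d q)"
  shows "eps_sum (- ls_val n d p) (- ls_val n d q) \<in> S_set n d"
proof -
  have mono: "count_ones d p \<le> count_ones d q" "count_zeros d p \<le> count_zeros d q"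
    using count_ones_mono count_zeros_mono assms(2) by auto
  have sum: "count_zeros d p + count_ones d p = p" "count_zeros d q + count_ones d q = q"
    using count_zeros_plus_count_ones by auto
  have le: "count_ones d p \<le> p" "count_ones d q \<le> q"
    using count_ones_le by auto
  have dp: "d ! (p - 1)" and dq: "d ! (q - 1)"
  proof -
    have "d ! (p - 1) \<and> d ! (q - 1)"
    proof (cases "d ! (p - 1)"; cases "d ! (q - 1)")
      assume "\<not> d ! (p - 1)" "\<not> d ! (q - 1)"
      then show ?thesis
        using assms(4) by (auto simp: ls_val_def pos_pair_def split: if_splits)
    next
      assume "\<not> d ! (p - 1)" "d ! (q - 1)"
      then show ?thesis
        using assms mono sum le by (auto simp: ls_val_def pos_pair_def split: if_splits)
    next
      assume "d ! (p - 1)" "\<not> d ! (q - 1)"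
      then show ?thesis
        using assms mono sum le by (auto simp: ls_val_def pos_pair_def split: if_splits)
    qed simp
    then show "d ! (p - 1)" "d ! (q - 1)" by auto
  qed
  have "S_index n d (count_ones d p) (n + 1 - count_ones d q)"
    unfolding S_index_def
    using ones_nth_count_ones[OF assms(1) _ dp, of n] count_ones_pos[OF assms(1) dp] assms
      count_ones_mono[of p n d] sum mono le
    by (auto simp: count_ones_def)
  moreover have "eps_sum (- ls_val n d p) (- ls_val n d q) = eps_sum (int (n + 1 - count_ones d q)) (int (n + 1 - count_ones d p))"
    using dp dq le assms unfolding ls_val_def by (simp add: eps_sum_commute of_nat_diff)
  ultimately show ?thesis
    by (rule S_setI)
qed

lemma Phi_ls_elem_subset_pair:
  assumes "x \<in> signed_range n" "y \<in> signed_range n" "x \<noteq> -y" "\<bar>x\<bar> \<le> \<bar>y\<bar>"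
    and "pos_pair (ls_elem n d x) (ls_elem n d y)" "\<not> pos_pair x y"
  shows "eps_sum (ls_elem n d x) (ls_elem n d y) \<in> S_set n d"
proof -
  have "x < 0"
    using assms(4,6) signed_range_nonzero[OF assms(1)] unfolding pos_pair_def by auto
  define p where "p = nat (-x)"
  have p: "1 \<le> p" "p \<le> n" "x = - int p"
    using assms(1) \<open>x < 0\<close> unfolding p_def signed_range_def by auto
  show ?thesis
  proof (cases "0 < y")
    case True
    define q where "q = nat y"
    have "1 \<le> q" "q \<le> n" "y = int q"
      using assms(2) True unfolding q_def signed_range_def by auto
    with p assms(3-5) show ?thesis
      using S_set_mixed_pair[of p q n d] ls_elem_neg ls_elem_pos by auto
  next
    case False
    define q where "q = nat (-y)"
    have "1 \<le> q" "q \<le> n" "y = - int q"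
      using assms(2) False unfolding q_def signed_range_def by auto
    with p assms(4,5) show ?thesis
      using S_set_negative_pair[of p q n d] ls_elem_neg by auto
  qed
qed


lemma Phi_ls_elem_subset: "Phi n (ls_elem n d) \<subseteq> S_set n d"
proof
  fix v
  assume v: "v \<in> Phi n (ls_elem n d)"
  then obtain x y where xy: "x \<in> signed_range n" "y \<in> signed_range n" "x \<noteq> -y"
    and v_eq: "v = eps_sum (ls_elem n d x) (ls_elem n d y)" and pos: "pos_pair (ls_elem n d x) (ls_elem n d y)"
    using pos_roots_obtain_image[OF signed_perm_ls_elem] Phi_subset_pos_roots by blast
  have not_pos: "\<not> pos_pair x y"
    using eps_sum_image_in_Phi_iff[OF signed_perm_ls_elem xy] v v_eq by simp
  have ne: "ls_elem n d x \<noteq> - ls_elem n d y"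
    using signed_perm_eq_uminus_iff[OF signed_perm_ls_elem xy(1,2)] xy(3) by simp
  show "v \<in> S_set n d"
  proof (cases "\<bar>x\<bar> \<le> \<bar>y\<bar>")
    case True
    then show ?thesis
      using Phi_ls_elem_subset_pair[OF xy True pos not_pos] v_eq by simp
  next
    case False
    then have "eps_sum (ls_elem n d y) (ls_elem n d x) \<in> S_set n d"
      using Phi_ls_elem_subset_pair[OF xy(2,1), of d] xy(3) pos not_pos
        pos_pair_commute[OF xy(3)] pos_pair_commute[OF ne] by auto
    then show ?thesis
      using v_eq eps_sum_commute by metis
  qed
qed

lemma ls_elem_preimage_beyond:
  assumes "1 \<le> p" "q \<in> signed_range n" "ls_elem n d q = int r" "count_zeros d p < r"
  shows "q < 0 \<or> int p < q"
  using assms(2)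
proof (cases rule: signed_range_cases)
  case (pos j)
  then have "\<not> d ! (j - 1)" "count_zeros d j = r"
    using assms(3,4) ls_elem_pos[of j n d] ls_val_bounds[of j n d] unfolding ls_val_def
    by (auto split: if_splits)
  then have "p < j"
    using assms(4) count_zeros_mono[of j p d] by (meson not_le)
  then show ?thesis
    using pos by simp
qed simp

lemma S_set_subset_Phi_ls_elem: "S_set n d \<subseteq> Phi n (ls_elem n d)"
proof
  fix v
  assume "v \<in> S_set n d"
  then obtain m r where v: "v = root_c r (n + 1 - m)" and mr: "S_index n d m r"
    unfolding S_set_eq by blast
  then have "1 \<le> m" "m \<le> length (ones n d)"
    unfolding S_index_def by auto
  then obtain p where p: "1 \<le> p" "p \<le> n" "d ! (p - 1)" "count_ones d p = m" "ones n d ! (m - 1) = p"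
    by (rule ones_nth_obtain)
  have "m \<le> p"
    using count_ones_le[of d p] p by simp
  then have r: "1 \<le> r" "r \<le> n" "p + 1 - m \<le> r"
    using mr p unfolding S_index_def by auto
  have v_eq: "v = eps_sum (int r) (int (n + 1 - m))"
    using v r \<open>m \<le> p\<close> p by (simp add: root_c_eq_eps_sum)
  have image_p: "ls_elem n d (- int p) = int (n + 1 - m)"
    using ls_elem_neg[OF p(1,2)] p(3,4) \<open>m \<le> p\<close> unfolding ls_val_def by simp
  obtain q where q: "q \<in> signed_range n" "ls_elem n d q = int r"
    using signed_perm_preimage[OF signed_perm_ls_elem, of "int r" n d] r unfolding signed_range_def by auto
  have "count_zeros d p < r"
    using count_zeros_plus_count_ones[of d p] p(4) r(3) \<open>m \<le> p\<close> by simp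
  then have "q < 0 \<or> int p < q"
    using ls_elem_preimage_beyond[OF p(1) q] by blast
  then have "q \<noteq> int p" "\<not> pos_pair q (- int p)"
    unfolding pos_pair_def by auto
  moreover have "pos_pair (ls_elem n d q) (ls_elem n d (- int p))"
    using q(2) image_p r \<open>m \<le> p\<close> p(2) unfolding pos_pair_def by auto
  ultimately have "eps_sum (ls_elem n d q) (ls_elem n d (- int p)) \<in> Phi n (ls_elem n d)"
    using eps_sum_image_in_Phi_iff[OF signed_perm_ls_elem q(1), of "- int p"] p(1,2)
    unfolding signed_range_def by auto
  then show "v \<in> Phi n (ls_elem n d)"
    using v_eq q(2) image_p by simp
qed

lemma Phi_ls_elem: "Phi n (ls_elem n d) = S_set n d"
  using Phi_ls_elem_subset S_set_subset_Phi_ls_elem by blast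

section \<open>LS words are determined by their inversion sets\<close>

lemma root_c_in_S_set_imp:
  assumes "r \<le> c" "root_c r c \<in> S_set n d"
  obtains m where "S_index n d m r" "c = n + 1 - m"
proof -
  obtain m r' where mr: "root_c r c = root_c r' (n + 1 - m)" "S_index n d m r'"
    using assms(2) unfolding S_set_eq by blast
  have "r' \<le> n + 1 - m"
    using mr(2) unfolding S_index_def by simp
  with root_c_eq_imp[OF mr(1)] assms(1) have "r = r'" "c = n + 1 - m"
    by auto
  with mr(2) that show ?thesis
    by blast
qed

lemma long_root_in_S_set_iff:
  assumes "1 \<le> m" "m \<le> n"
  shows "root_c (n + 1 - m) (n + 1 - m) \<in> S_set n d \<longleftrightarrow> m \<le> length (ones n d)"
proof
  assume "m \<le> length (ones n d)"
  then have "S_index n d m (n + 1 - m)"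
    using ones_nth_bounds[of m n d] assms unfolding S_index_def by auto
  then show "root_c (n + 1 - m) (n + 1 - m) \<in> S_set n d"
    unfolding S_set_eq by blast
next
  assume "root_c (n + 1 - m) (n + 1 - m) \<in> S_set n d"
  then obtain m' where "S_index n d m' (n + 1 - m)" "n + 1 - m = n + 1 - m'"
    by (rule root_c_in_S_set_imp[OF order_refl])
  moreover have "m' \<le> n"
    using calculation(1) length_ones_le[of n d] unfolding S_index_def by simp
  ultimately show "m \<le> length (ones n d)"
    using assms unfolding S_index_def by auto
qed

lemma length_ones_le_if_S_set_subset:
  assumes "S_set n d' \<subseteq> S_set n d"
  shows "length (ones n d') \<le> length (ones n d)"
proof (cases "length (ones n d') = 0")
  case False
  then have "1 \<le> length (ones n d')" "length (ones n d') \<le> n"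
    using length_ones_le[of n d'] by linarith+
  with long_root_in_S_set_iff[of "length (ones n d')" n] assms show ?thesis
    by blast
qed simp

lemma ones_nth_le_if_S_set_subset:
  assumes "1 \<le> m" "m \<le> length (ones n d)" "length (ones n d) = length (ones n d')"
    and "S_set n d \<subseteq> S_set n d'"
  shows "ones n d' ! (m - 1) \<le> ones n d ! (m - 1)"
proof -
  let ?r = "ones n d ! (m - 1) + 1 - m"
  have bounds: "m \<le> ones n d ! (m - 1)" "ones n d ! (m - 1) \<le> n"
    using ones_nth_bounds assms(1,2) by auto
  then have "S_index n d m ?r"
    using assms(1,2) unfolding S_index_def by auto
  then have "root_c ?r (n + 1 - m) \<in> S_set n d'"
    using assms(4) unfolding S_set_eq by blast
  moreover have "?r \<le> n + 1 - m"
    using bounds by simp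
  ultimately obtain m' where m': "S_index n d' m' ?r" "n + 1 - m = n + 1 - m'"
    using root_c_in_S_set_imp by metis
  have "m' \<le> n"
    using m'(1) length_ones_le[of n d'] unfolding S_index_def by simp
  with m'(2) bounds have "m' = m"
    by simp
  with m'(1) have "ones n d' ! (m - 1) + 1 - m \<le> ?r"
    unfolding S_index_def by simp
  moreover have "m \<le> ones n d' ! (m - 1)"
    using ones_nth_bounds[of m n d'] assms(1-3) by simp
  ultimately show ?thesis
    using bounds by linarith
qed

lemma S_set_inj:
  assumes "length d = n" "length d' = n" "S_set n d = S_set n d'"
  shows "d = d'"
proof -
  have len: "length (ones n d) = length (ones n d')"
    using length_ones_le_if_S_set_subset assms(3) by (metis le_antisym order_refl)
  have "ones n d = ones n d'"
  proof (rule nth_equalityI)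
    fix i
    assume "i < length (ones n d)"
    then show "ones n d ! i = ones n d' ! i"
      using ones_nth_le_if_S_set_subset[of "Suc i" n d d'] ones_nth_le_if_S_set_subset[of "Suc i" n d' d]
        len assms(3) by fastforce
  qed (rule len)
  show ?thesis
  proof (rule nth_equalityI)
    fix i
    assume "i < length d"
    then have "d ! i \<longleftrightarrow> Suc i \<in> set (ones n d)" "d' ! i \<longleftrightarrow> Suc i \<in> set (ones n d')"
      using assms(1,2) unfolding Suc_in_set_ones_iff by auto
    then show "d ! i = d' ! i"
      using \<open>ones n d = ones n d'\<close> by simp
  qed (use assms in simp)
qed

lemma LS_eqI:
  assumes "length d = n" "Phi n w = S_set n d"
  shows "LS n w = d"
  unfolding LS_def
proof (rule the_equality)
  show "length d = n \<and> Phi n w = S_set n d"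
    using assms by simp
next
  fix d'
  assume "length d' = n \<and> Phi n w = S_set n d'"
  then show "d' = d"
    using S_set_inj[of d' n d] assms by metis
qed

lemma LS_ls_elem: "length d = n \<Longrightarrow> LS n (ls_elem n d) = d"
  using LS_eqI Phi_ls_elem by blast


section \<open>Elements of \<open>W\<^sup>p\<close> are determined by their sign words\<close>

definition sign_word :: "nat \<Rightarrow> (int \<Rightarrow> int) \<Rightarrow> bool list" where
  "sign_word n w = map (\<lambda>j. w (int j) < 0) [1..<Suc n]"

lemma length_sign_word: "length (sign_word n w) = n"
  by (simp add: sign_word_def)

lemma sign_word_nth:
  assumes "1 \<le> j" "j \<le> n"
  shows "sign_word n w ! (j - 1) \<longleftrightarrow> w (int j) < 0"
proof -
  have "[1..<Suc n] ! (j - 1) = j"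
    using assms nth_upt[of 1 "j - 1" "Suc n"] by simp
  then show ?thesis
    using assms unfolding sign_word_def by (simp del: upt_Suc)
qed

text \<open>For \<open>p < q\<close> the roots \<open>\<epsilon>\<^sub>q - \<epsilon>\<^sub>p\<close> and \<open>-\<epsilon>\<^sub>p - \<epsilon>\<^sub>q\<close> are negative, so if w makes one of them
positive, its image lies in \<open>\<Phi>\<^sub>w \<subseteq> \<Delta>(u)\<close>.\<close>

lemma Wp_order:
  assumes perm: "signed_perm n w" and D: "Phi n w \<subseteq> Delta_u n" and pq: "1 \<le> p" "p < q" "q \<le> n"
  shows "0 < w (int p) \<Longrightarrow> 0 < w (int q) \<Longrightarrow> w (int p) < w (int q)"
    and "w (int p) < 0 \<Longrightarrow> w (int q) < 0 \<Longrightarrow> w (int p) < w (int q)"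
    and "0 < w (int p) \<Longrightarrow> w (int q) < 0 \<Longrightarrow> \<bar>w (int p)\<bar> < \<bar>w (int q)\<bar>"
    and "w (int p) < 0 \<Longrightarrow> 0 < w (int q) \<Longrightarrow> \<bar>w (int q)\<bar> < \<bar>w (int p)\<bar>"
proof -
  have I: "- int p \<in> signed_range n" "int q \<in> signed_range n" "- int q \<in> signed_range n" "int p \<in> signed_range n"
    using pq by (auto simp: signed_range_def)
  have ne: "w (int p) \<noteq> w (int q)"
    using signed_perm_eq_iff[OF perm I(4) I(2)] pq by simp
  have ne_uminus: "w (- int p) \<noteq> - w (int q)" "w (- int p) \<noteq> - w (- int q)"
    using signed_perm_eq_uminus_iff[OF perm I(1) I(2)] signed_perm_eq_uminus_iff[OF perm I(1) I(3)] pq by auto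
  have in_Delta: "\<not> pos_pair (w (- int p)) (w y) \<or> (0 < w (- int p) \<and> 0 < w y)"
    if y: "y \<in> signed_range n" "- int p \<noteq> -y" "\<not> pos_pair (- int p) y" for y
  proof (cases "pos_pair (w (- int p)) (w y)")
    case True
    then have "eps_sum (w (- int p)) (w y) \<in> Phi n w"
      using eps_sum_image_in_Phi_iff[OF perm I(1) y(1,2)] y(3) by auto
    then show ?thesis
      using D eps_sum_in_Delta_u_iff[of "w (- int p)" n "w y"] signed_perm_in[OF perm] I(1) y(1,2)
        signed_perm_eq_uminus_iff[OF perm I(1) y(1)] by auto
  qed simp
  have c1: "\<not> pos_pair (w (- int p)) (w (int q)) \<or> (0 < w (- int p) \<and> 0 < w (int q))"
    by (rule in_Delta) (use I pq in \<open>auto simp: pos_pair_def\<close>)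
  have c2: "\<not> pos_pair (w (- int p)) (w (- int q)) \<or> (0 < w (- int p) \<and> 0 < w (- int q))"
    by (rule in_Delta) (use I pq in \<open>auto simp: pos_pair_def\<close>)
  note uminus = signed_perm_uminus[OF perm, of "int p"] signed_perm_uminus[OF perm, of "int q"]
  show "0 < w (int p) \<Longrightarrow> 0 < w (int q) \<Longrightarrow> w (int p) < w (int q)"
    using c1 ne uminus unfolding pos_pair_def by (auto split: if_splits)
  show "w (int p) < 0 \<Longrightarrow> w (int q) < 0 \<Longrightarrow> w (int p) < w (int q)"
    using c1 ne uminus unfolding pos_pair_def by (auto split: if_splits)
  show "0 < w (int p) \<Longrightarrow> w (int q) < 0 \<Longrightarrow> \<bar>w (int p)\<bar> < \<bar>w (int q)\<bar>"
    using c2 ne_uminus uminus unfolding pos_pair_def by (auto split: if_splits)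
  show "w (int p) < 0 \<Longrightarrow> 0 < w (int q) \<Longrightarrow> \<bar>w (int q)\<bar> < \<bar>w (int p)\<bar>"
    using c2 ne_uminus uminus unfolding pos_pair_def by (auto split: if_splits)
qed

lemma Wp_image_zero_positions:
  assumes perm: "signed_perm n w" and D: "Phi n w \<subseteq> Delta_u n" and j: "1 \<le> j" "j \<le> n"
    and pos: "0 < w (int j)"
  shows "(\<lambda>q. w (int q)) ` {q \<in> {1..j}. \<not> sign_word n w ! (q - 1)} = {1..w (int j)}"
proof -
  let ?Z = "{q \<in> {1..j}. \<not> sign_word n w ! (q - 1)}"
  note order = Wp_order[OF perm D]
  have pos_iff: "0 < w (int q) \<longleftrightarrow> \<not> sign_word n w ! (q - 1)" if "1 \<le> q" "q \<le> n" for q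
    using sign_word_nth[OF that] signed_perm_nonzero[OF perm, of "int q"] that
    by (auto simp: signed_range_def)
  show ?thesis
  proof (rule set_eqI, rule iffI)
    fix v
    assume "v \<in> (\<lambda>q. w (int q)) ` ?Z"
    then obtain q where q: "1 \<le> q" "q \<le> j" "\<not> sign_word n w ! (q - 1)" "v = w (int q)"
      by auto
    then have "0 < w (int q)"
      using pos_iff j by simp
    moreover have "w (int q) \<le> w (int j)"
      using order(1)[of q j] q j pos \<open>0 < w (int q)\<close> by (cases "q = j") auto
    ultimately show "v \<in> {1..w (int j)}"
      using q by auto
  next
    fix v
    assume v: "v \<in> {1..w (int j)}"
    then have "v \<in> signed_range n"
      using signed_perm_in[OF perm, of "int j"] j by (auto simp: signed_range_def)
    then obtain x where x: "x \<in> signed_range n" "w x = v"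
      using signed_perm_preimage[OF perm] by blast
    then show "v \<in> (\<lambda>q. w (int q)) ` ?Z"
    proof (cases rule: signed_range_cases)
      case (pos q)
      then have "q \<le> j"
        using order(1)[of j q] j x pos v by (cases "j < q") auto
      then show ?thesis
        using pos x v pos_iff[of q] by (intro image_eqI[of _ _ q]) auto
    next
      case (neg q)
      then have "w (int q) = - v"
        using x(2) signed_perm_uminus[OF perm, of "int q"] by simp
      moreover from this have "q \<noteq> j"
        using pos v by auto
      ultimately show ?thesis
        using order(3)[of j q] order(4)[of q j] neg j pos v by (cases "q < j") auto
    qed
  qed
qed

lemma Wp_positive_value:
  assumes perm: "signed_perm n w" and D: "Phi n w \<subseteq> Delta_u n" and j: "1 \<le> j" "j \<le> n"
    and pos: "0 < w (int j)"
  shows "w (int j) = int (count_zeros (sign_word n w) j)"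
proof -
  let ?Z = "{q \<in> {1..j}. \<not> sign_word n w ! (q - 1)}"
  have "inj_on (\<lambda>q. w (int q)) ?Z"
    by (rule inj_onI) (use signed_perm_eq_iff[OF perm] j in \<open>auto simp: signed_range_def\<close>)
  then have "card ?Z = nat (w (int j))"
    using Wp_image_zero_positions[OF assms] card_image by fastforce
  then show ?thesis
    using count_zeros_eq_card pos by simp
qed

lemma Wp_image_one_positions:
  assumes perm: "signed_perm n w" and D: "Phi n w \<subseteq> Delta_u n" and j: "1 \<le> j" "j \<le> n"
    and neg: "w (int j) < 0"
  shows "(\<lambda>q. - w (int q)) ` {q \<in> {1..j}. sign_word n w ! (q - 1)} = {- w (int j)..int n}"
proof -
  let ?O = "{q \<in> {1..j}. sign_word n w ! (q - 1)}"
  note order = Wp_order[OF perm D]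
  have bound: "- w (int q) \<le> int n" if "1 \<le> q" "q \<le> n" for q
    using signed_perm_in[OF perm, of "int q"] that by (auto simp: signed_range_def)
  show ?thesis
  proof (rule set_eqI, rule iffI)
    fix v
    assume "v \<in> (\<lambda>q. - w (int q)) ` ?O"
    then obtain q where q: "1 \<le> q" "q \<le> j" "sign_word n w ! (q - 1)" "v = - w (int q)"
      by auto
    then have "w (int q) < 0"
      using sign_word_nth[of q n w] j by simp
    moreover have "w (int q) \<le> w (int j)"
      using order(2)[of q j] q j neg \<open>w (int q) < 0\<close> by (cases "q = j") auto
    ultimately show "v \<in> {- w (int j)..int n}"
      using q j bound[of q] by auto
  next
    fix v
    assume v: "v \<in> {- w (int j)..int n}"
    then have "- v \<in> signed_range n"
      using neg by (auto simp: signed_range_def)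
    then obtain x where x: "x \<in> signed_range n" "w x = - v"
      using signed_perm_preimage[OF perm] by blast
    then show "v \<in> (\<lambda>q. - w (int q)) ` ?O"
    proof (cases rule: signed_range_cases)
      case (pos q)
      then have "q \<le> j"
        using order(2)[of j q] j x neg v by (cases "j < q") auto
      then show ?thesis
        using pos x v neg sign_word_nth[of q n w] by (intro image_eqI[of _ _ q]) auto
    next
      case (neg q)
      then have "w (int q) = v"
        using x(2) signed_perm_uminus[OF perm, of "int q"] by simp
      moreover from this have "q \<noteq> j"
        using \<open>w (int j) < 0\<close> v by auto
      ultimately show ?thesis
        using order(3)[of q j] order(4)[of j q] neg j \<open>w (int j) < 0\<close> v by (cases "q < j") auto
    qed
  qed
qed

lemma Wp_negative_value:
  assumes perm: "signed_perm n w" and D: "Phi n w \<subseteq> Delta_u n" and j: "1 \<le> j" "j \<le> n"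
    and neg: "w (int j) < 0"
  shows "w (int j) = - int (n + 1 - count_ones (sign_word n w) j)"
proof -
  let ?O = "{q \<in> {1..j}. sign_word n w ! (q - 1)}"
  have "inj_on (\<lambda>q. - w (int q)) ?O"
    by (rule inj_onI) (use signed_perm_eq_iff[OF perm] j in \<open>auto simp: signed_range_def\<close>)
  then have "card ?O = nat (int n + w (int j) + 1)"
    using Wp_image_one_positions[OF assms] card_image by fastforce
  moreover have "- w (int j) \<le> int n"
    using signed_perm_in[OF perm, of "int j"] j by (auto simp: signed_range_def)
  ultimately have "int (count_ones (sign_word n w) j) = int n + w (int j) + 1"
    using count_ones_eq_card by simp
  then show ?thesis
    using count_ones_le[of "sign_word n w" j] j by (simp add: of_nat_diff)
qed

lemma Wp_eq_ls_elem:
  assumes perm: "signed_perm n w" and D: "Phi n w \<subseteq> Delta_u n"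
  shows "w = ls_elem n (sign_word n w)"
proof -
  have on_positive: "w (int j) = ls_elem n (sign_word n w) (int j)" if "1 \<le> j" "j \<le> n" for j
    using Wp_positive_value[OF perm D that] Wp_negative_value[OF perm D that] sign_word_nth[OF that]
      signed_perm_nonzero[OF perm, of "int j"] that
    by (auto simp: ls_elem_pos ls_val_def signed_range_def)
  show ?thesis
  proof
    fix x
    show "w x = ls_elem n (sign_word n w) x"
    proof (cases "x \<in> signed_range n")
      case False
      then show ?thesis
        using signed_perm_outside[OF perm] signed_perm_outside[OF signed_perm_ls_elem] by metis
    next
      case True
      then show ?thesis
      proof (cases rule: signed_range_cases)
        case (pos j)
        then show ?thesis using on_positive by simp
      next
        case (neg j)
        then show ?thesis
          using on_positive[of j] signed_perm_uminus[OF perm] signed_perm_uminus[OF signed_perm_ls_elem] by simp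
      qed
    qed
  qed
qed


section \<open>The singular Hasse diagram\<close>

lemma Wp_eq_image_ls_elem: "Wp n = ls_elem n ` {d. length d = n}"
proof (rule set_eqI, rule iffI)
  fix w
  assume "w \<in> Wp n"
  then have "signed_perm n w" "Phi n w \<subseteq> Delta_u n"
    unfolding Wp_def weyl_iff_signed_perm by auto
  then show "w \<in> ls_elem n ` {d. length d = n}"
    using Wp_eq_ls_elem length_sign_word by blast
next
  fix w
  assume "w \<in> ls_elem n ` {d. length d = n}"
  then obtain d where "w = ls_elem n d"
    by blast
  then show "w \<in> Wp n"
    unfolding Wp_def weyl_iff_signed_perm
    using signed_perm_ls_elem Phi_ls_elem S_set_subset_Delta_u by simp
qed

lemma comp_simple_refl_ascends_in_Wp_iff:
  assumes w: "w \<in> Wp n" and i: "1 \<le> i" "i \<le> n"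
  shows "w \<circ> simple_refl n i \<in> Wp n \<and> len n w < len n (w \<circ> simple_refl n i)
     \<longleftrightarrow> 0 < w (alpha_fst i) \<and> 0 < w (alpha_snd n i)"
proof -
  let ?v = "w \<circ> simple_refl n i"
  have perm: "signed_perm n w" and D: "Phi n w \<subseteq> Delta_u n"
    using w unfolding Wp_def weyl_iff_signed_perm by auto
  have perm_v: "signed_perm n ?v"
    using signed_perm_comp[OF perm signed_perm_simple_refl[OF i]] .
  note alpha = alpha_in_signed_range[OF i]
  have image_in_Delta_iff: "alpha_image n w i \<in> Delta_u n \<longleftrightarrow> 0 < w (alpha_fst i) \<and> 0 < w (alpha_snd n i)"
  proof (rule eps_sum_in_Delta_u_iff)
    show "w (alpha_fst i) \<noteq> - w (alpha_snd n i)"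
      using signed_perm_eq_uminus_iff[OF perm alpha(1,2)] alpha(3) by simp
  qed (use signed_perm_in[OF perm] alpha in auto)
  have len_iff: "len n w < len n ?v \<longleftrightarrow> alpha_pos n w i"
  proof (cases "alpha_pos n w i")
    case True
    then show ?thesis
      using card_Phi_ascent[OF perm i] len_eq_card_Phi[OF perm] len_eq_card_Phi[OF perm_v] by simp
  next
    case False
    then show ?thesis
      using card_Phi_descent[OF perm i] len_eq_card_Phi[OF perm] len_eq_card_Phi[OF perm_v] by simp
  qed
  show ?thesis
  proof
    assume "?v \<in> Wp n \<and> len n w < len n ?v"
    then have "alpha_pos n w i" "Phi n ?v \<subseteq> Delta_u n"
      using len_iff unfolding Wp_def by auto
    then show "0 < w (alpha_fst i) \<and> 0 < w (alpha_snd n i)"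
      using Phi_ascent(1)[OF perm i] image_in_Delta_iff by auto
  next
    assume pos: "0 < w (alpha_fst i) \<and> 0 < w (alpha_snd n i)"
    then have "alpha_pos n w i"
      unfolding pos_pair_def by simp
    then show "?v \<in> Wp n \<and> len n w < len n ?v"
      using Phi_ascent(1)[OF perm i] image_in_Delta_iff pos D len_iff perm_v
      unfolding Wp_def weyl_iff_signed_perm by auto
  qed
qed

lemma ls_elem_alpha_pos_iff:
  assumes "1 \<le> i" "i \<le> n"
  shows "0 < ls_elem n d (alpha_fst i) \<and> 0 < ls_elem n d (alpha_snd n i) \<longleftrightarrow>
     (if i < n then \<not> d ! (i - 1) \<and> d ! i else \<not> d ! (n - 1))"
proof (cases "i < n")
  case True
  then have "alpha_snd n i = - int (i + 1)"
    unfolding alpha_snd_def by simp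
  then have "ls_elem n d (alpha_snd n i) = - ls_val n d (i + 1)"
    using ls_elem_neg[of "i + 1" n d] True by simp
  then show ?thesis
    using True ls_elem_pos[OF assms] ls_val_bounds[OF assms, of d] ls_val_bounds[of "i + 1" n d]
    unfolding alpha_fst_def by simp
next
  case False
  then have "i = n"
    using assms by simp
  then show ?thesis
    using ls_elem_pos[OF assms, of d] ls_val_bounds[OF assms, of d] unfolding alpha_fst_def alpha_snd_def by simp
qed

lemma Sigma_subset: "Sigma n lam \<subseteq> {1..n}"
  unfolding Sigma_def by auto

lemma ls_elem_in_WpSigma_iff:
  assumes "length d = n"
  shows "ls_elem n d \<in> WpSigma n lam \<longleftrightarrow>
    (\<forall>i\<in>Sigma n lam. if i < n then \<not> d ! (i - 1) \<and> d ! i else \<not> d ! (n - 1))"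
proof -
  have w: "ls_elem n d \<in> Wp n"
    using assms Wp_eq_image_ls_elem by blast
  have "ls_elem n d \<in> WpSigma n lam \<longleftrightarrow> (\<forall>i\<in>Sigma n lam. ls_elem n d \<circ> simple_refl n i \<in> Wp n
      \<and> len n (ls_elem n d) < len n (ls_elem n d \<circ> simple_refl n i))"
    unfolding WpSigma_def using w by simp
  also have "\<dots> \<longleftrightarrow> (\<forall>i\<in>Sigma n lam. if i < n then \<not> d ! (i - 1) \<and> d ! i else \<not> d ! (n - 1))"
  proof (rule ball_cong[OF refl])
    fix i
    assume "i \<in> Sigma n lam"
    then have i: "1 \<le> i" "i \<le> n"
      using Sigma_subset[of n lam] by auto
    show "ls_elem n d \<circ> simple_refl n i \<in> Wp n \<and> len n (ls_elem n d) < len n (ls_elem n d \<circ> simple_refl n i)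
      \<longleftrightarrow> (if i < n then \<not> d ! (i - 1) \<and> d ! i else \<not> d ! (n - 1))"
      by (rule trans[OF comp_simple_refl_ascends_in_Wp_iff[OF w i] ls_elem_alpha_pos_iff[OF i]])
  qed
  finally show ?thesis .
qed

lemma LS_image_WpSigma:
  "LS n ` WpSigma n lam = {d. length d = n \<and>
     (\<forall>i\<in>Sigma n lam. if i < n then \<not> d ! (i - 1) \<and> d ! i else \<not> d ! (n - 1))}"
  (is "_ = ?D")
proof -
  have "WpSigma n lam = ls_elem n ` ?D"
  proof (rule set_eqI, rule iffI)
    fix w
    assume w: "w \<in> WpSigma n lam"
    then obtain d where "length d = n" "w = ls_elem n d"
      unfolding WpSigma_def Wp_eq_image_ls_elem by blast
    with w show "w \<in> ls_elem n ` ?D"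
      using ls_elem_in_WpSigma_iff[of d n lam] by blast
  next
    fix w
    assume "w \<in> ls_elem n ` ?D"
    then show "w \<in> WpSigma n lam"
      using ls_elem_in_WpSigma_iff by blast
  qed
  then have "LS n ` WpSigma n lam = (\<lambda>d. LS n (ls_elem n d)) ` ?D"
    by (simp add: image_image)
  also have "\<dots> = (\<lambda>d. d) ` ?D"
    by (rule image_cong[OF refl]) (simp add: LS_ls_elem)
  finally show ?thesis
    by simp
qed

theorem mainTheorem5:
  fixes n :: nat and lam :: "nat \<Rightarrow> int"
  assumes "n \<ge> 1"
    and dom: "\<forall>i. 1 \<le> i \<and> i < n \<longrightarrow> lam_rho n lam i \<ge> lam_rho n lam (i + 1)"
    and dom_n: "lam_rho n lam n \<ge> 0"
    and nonadj: "\<forall>i \<in> Sigma n lam. i + 1 \<notin> Sigma n lam"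
  shows "(n \<notin> Sigma n lam \<longrightarrow>
            LS n ` WpSigma n lam =
              {d. length d = n \<and> (\<forall>i \<in> Sigma n lam. \<not> d ! (i - 1) \<and> d ! i)})
       \<and> (n \<in> Sigma n lam \<longrightarrow>
            LS n ` WpSigma n lam =
              {d. length d = n \<and> \<not> d ! (n - 1) \<and>
                  (\<forall>i \<in> Sigma n lam - {n}. \<not> d ! (i - 1) \<and> d ! i)})"
proof (intro conjI impI)
  have below_n: "i < n" if "i \<in> Sigma n lam" "i \<noteq> n" for i
    using that Sigma_subset by fastforce
  show "LS n ` WpSigma n lam = {d. length d = n \<and> (\<forall>i \<in> Sigma n lam. \<not> d ! (i - 1) \<and> d ! i)}"
    if "n \<notin> Sigma n lam"
  proof -
    have "\<forall>i\<in>Sigma n lam. i < n"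
      using below_n that by blast
    then show ?thesis
      unfolding LS_image_WpSigma by auto
  qed
  show "LS n ` WpSigma n lam = {d. length d = n \<and> \<not> d ! (n - 1) \<and>
      (\<forall>i \<in> Sigma n lam - {n}. \<not> d ! (i - 1) \<and> d ! i)}"
    if "n \<in> Sigma n lam"
  proof -
    have "(\<forall>i\<in>Sigma n lam. P i) \<longleftrightarrow> P n \<and> (\<forall>i\<in>Sigma n lam - {n}. P i)" for P
      using that by blast
    moreover have "\<forall>i\<in>Sigma n lam - {n}. i < n"
      using below_n by blast
    ultimately show ?thesis
      unfolding LS_image_WpSigma by auto
  qed
qed

end
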